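(* Let $p,q$ be positive integers with $\min\{2,\frac{p}{4}\}\leq q\leq 4p$. Then \[pq+\left\lfloor\frac{1}{2}\binom{q}{2}\right\rfloor\leq \operatorname{diam}(\mathcal{R}(K_{p,q})).\]
   Context: $K_{p,q}$ is the complete bipartite graph with parts of sizes $p$ and $q$. For a connected graph $G$, a search tree on $G$ is a rooted tree with vertex set $V(G)$ defined recursively: its root is some vertex $r\in V(G)$, and the children of $r$ are the roots of search trees on the connected components of $G-r$. For a rooted tree $T$ and $w\in V(T)$, $T|w$ denotes the subtree rooted at $w$. Let $T$ be a search tree on $G$, let $v$ be a child of $u$ in $T$, and let $p$ be the parent of $u$ (if it exists). The $uv$-rotation transforms $T$ into the search tree $T'$ in which: $u$ is a child of $v$ and $v$ is a child of $p$ (or $v$ is the root if $u$ was the root); every subtree of $u$ in $T$ other than $T|v$ is a subtree of $u$ in $T'$; and every subtree $S$ of $v$ in $T$ is a subtree of $u$ in $T'$ if $u$ is adjacent in $G$ to some vertex of $S$, and a subtree of $v$ in $T'$ otherwise. The rotation graph $\mathcal{R}(G)$ is the graph whose vertices are the search trees on $G$, two being adjacent iff they differ by one rotation. $\operatorname{diam}$ denotes graph diameter. *)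

theory Defs
  imports Main "HOL-Library.Extended_Nat"
begin

(* Graphs: vertex set V :: 'a set, adjacency E :: 'a => 'a => bool (symmetric, irreflexive). *)

definition reach_in :: "('a \<Rightarrow> 'a \<Rightarrow> bool) \<Rightarrow> 'a set \<Rightarrow> 'a \<Rightarrow> 'a \<Rightarrow> bool" where
  "reach_in E S x y \<longleftrightarrow> (x, y) \<in> {(a, b). a \<in> S \<and> b \<in> S \<and> E a b}\<^sup>*"

definition components_in :: "('a \<Rightarrow> 'a \<Rightarrow> bool) \<Rightarrow> 'a set \<Rightarrow> 'a set set" where
  "components_in E S = {{y \<in> S. reach_in E S x y} | x. x \<in> S}"

definition connected_in :: "('a \<Rightarrow> 'a \<Rightarrow> bool) \<Rightarrow> 'a set \<Rightarrow> bool" where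
  "connected_in E S \<longleftrightarrow> S \<noteq> {} \<and> (\<forall>x\<in>S. \<forall>y\<in>S. reach_in E S x y)"

(* A rooted tree on a vertex set is represented by its parent map f
   (f x = None for the root and for vertices outside the tree).
   st E f S r: the tree described by f restricted to S is a search tree on G[S] rooted at r,
   i.e. r \<in> S and the children of r are the roots of search trees on the components of G[S]-r. *)
inductive st :: "('a \<Rightarrow> 'a \<Rightarrow> bool) \<Rightarrow> ('a \<Rightarrow> 'a option) \<Rightarrow> 'a set \<Rightarrow> 'a \<Rightarrow> bool"
  for E f where
  "r \<in> S \<Longrightarrow> (\<forall>C \<in> components_in E (S - {r}). \<exists>c\<in>C. f c = Some r \<and> st E f C c)
    \<Longrightarrow> st E f S r"

definition search_tree :: "('a \<Rightarrow> 'a \<Rightarrow> bool) \<Rightarrow> 'a set \<Rightarrow> ('a \<Rightarrow> 'a option) \<Rightarrow> bool" where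
  "search_tree E V f \<longleftrightarrow> (\<exists>r. st E f V r \<and> f r = None) \<and> (\<forall>x. x \<notin> V \<longrightarrow> f x = None)"

definition subtree :: "('a \<Rightarrow> 'a option) \<Rightarrow> 'a \<Rightarrow> 'a set" where
  "subtree f w = {x. (x, w) \<in> {(a, b). f a = Some b}\<^sup>*}"

(* the uv-rotation, where v is a child of u (f v = Some u) *)
definition rotate :: "('a \<Rightarrow> 'a \<Rightarrow> bool) \<Rightarrow> ('a \<Rightarrow> 'a option) \<Rightarrow> 'a \<Rightarrow> 'a \<Rightarrow> ('a \<Rightarrow> 'a option)" where
  "rotate E f u v = (\<lambda>x.
     if x = v then f u
     else if x = u then Some v
     else if f x = Some v then (if (\<exists>y \<in> subtree f x. E u y) then Some u else Some v)
     else f x)"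

definition rotation_step :: "('a \<Rightarrow> 'a \<Rightarrow> bool) \<Rightarrow> ('a \<Rightarrow> 'a option) \<Rightarrow> ('a \<Rightarrow> 'a option) \<Rightarrow> bool" where
  "rotation_step E f g \<longleftrightarrow> (\<exists>u v. f v = Some u \<and> g = rotate E f u v)"

definition rot_edges :: "('a \<Rightarrow> 'a \<Rightarrow> bool) \<Rightarrow> 'a set \<Rightarrow> (('a \<Rightarrow> 'a option) \<times> ('a \<Rightarrow> 'a option)) set" where
  "rot_edges E V = {(f, g). search_tree E V f \<and> search_tree E V g \<and>
                            (rotation_step E f g \<or> rotation_step E g f)}"

(* graph distance in R(G) (infinity if not connected) *)
definition rot_dist :: "('a \<Rightarrow> 'a \<Rightarrow> bool) \<Rightarrow> 'a set \<Rightarrow> ('a \<Rightarrow> 'a option) \<Rightarrow> ('a \<Rightarrow> 'a option) \<Rightarrow> enat" where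
  "rot_dist E V f g = (INF n \<in> {n. (f, g) \<in> (rot_edges E V) ^^ n}. enat n)"

definition rot_diam :: "('a \<Rightarrow> 'a \<Rightarrow> bool) \<Rightarrow> 'a set \<Rightarrow> enat" where
  "rot_diam E V = (SUP (f, g) \<in> {(f, g). search_tree E V f \<and> search_tree E V g}. rot_dist E V f g)"

definition Kpq_verts :: "nat \<Rightarrow> nat \<Rightarrow> (nat + nat) set" where
  "Kpq_verts p q = Inl ` {..<p} \<union> Inr ` {..<q}"

definition Kpq_adj :: "nat + nat \<Rightarrow> nat + nat \<Rightarrow> bool" where
  "Kpq_adj x y \<longleftrightarrow> isl x \<noteq> isl y"

end

(*
  The lower bound comes from a potential on search trees of K_{p,q} that changes by at most 2
  under a rotation.  For a search tree T and a vertex Inr i of the second part, let N(i) be the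
  number of vertices of the first part below Inr i, and call a pair of distinct vertices Inr i,
  Inr j with i < j inverted when Inr j is not an ancestor of Inr i.  Against a target profile m,
  the potential is the minimum over sets Z of such vertices of
    2 * (sum over i in Z of (N(i) + m(i)) + sum over i not in Z of |N(i) - m(i)|)
    + number of inverted pairs not inside Z.
  A rotation of two vertices of the same part only changes whether that pair is inverted.  A
  rotation moving a vertex of one part across a vertex of the other changes one count by one;
  the inversions it changes all lie among vertices whose counts vanish on one side, and putting
  those vertices into Z absorbs them.
  With m spreading ceil((q choose 2) / 2) evenly, the tree whose second part is a path above
  the first part has potential at least 2 (p q + floor((q choose 2) / 2)), while a path-like
  tree realising m without inversions has potential 0.
*)
theory Submission
  imports Defs
begin

section \<open>Reachability and connected components\<close>

definition induced_edges :: "('a \<Rightarrow> 'a \<Rightarrow> bool) \<Rightarrow> 'a set \<Rightarrow> ('a \<times> 'a) set" where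
  "induced_edges E S = {(a, b). a \<in> S \<and> b \<in> S \<and> E a b}"

lemma reach_in_iff_rtrancl: "reach_in E S x y \<longleftrightarrow> (x, y) \<in> (induced_edges E S)\<^sup>*"
  unfolding reach_in_def induced_edges_def by simp

lemma reach_in_refl: "reach_in E S x x"
  by (simp add: reach_in_iff_rtrancl)

lemma reach_in_sym:
  assumes "symp E" and "reach_in E S x y"
  shows "reach_in E S y x"
proof -
  have "(induced_edges E S)\<inverse> = induced_edges E S"
    using sympD[OF assms(1)] unfolding induced_edges_def by blast
  moreover have "(y, x) \<in> ((induced_edges E S)\<inverse>)\<^sup>*"
    using assms(2) by (simp add: reach_in_iff_rtrancl rtrancl_converseI)
  ultimately show ?thesis by (simp add: reach_in_iff_rtrancl)
qed

lemma reach_in_trans: "reach_in E S x y \<Longrightarrow> reach_in E S y z \<Longrightarrow> reach_in E S x z"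
  by (simp add: reach_in_iff_rtrancl)

lemma reach_in_step:
  "reach_in E S x y \<Longrightarrow> y \<in> S \<Longrightarrow> z \<in> S \<Longrightarrow> E y z \<Longrightarrow> reach_in E S x z"
  unfolding reach_in_iff_rtrancl
  by (rule rtrancl_into_rtrancl) (auto simp: induced_edges_def)

lemma reach_in_edge: "y \<in> S \<Longrightarrow> z \<in> S \<Longrightarrow> E y z \<Longrightarrow> reach_in E S y z"
  using reach_in_step[OF reach_in_refl] by metis

abbreviation component_of :: "('a \<Rightarrow> 'a \<Rightarrow> bool) \<Rightarrow> 'a set \<Rightarrow> 'a \<Rightarrow> 'a set" where
  "component_of E S x \<equiv> {y \<in> S. reach_in E S x y}"

lemma components_in_iff: "C \<in> components_in E S \<longleftrightarrow> (\<exists>x\<in>S. C = component_of E S x)"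
  unfolding components_in_def by auto

lemma components_in_subset: "C \<in> components_in E S \<Longrightarrow> C \<subseteq> S"
  unfolding components_in_iff by auto

lemma component_of_in_components: "x \<in> S \<Longrightarrow> component_of E S x \<in> components_in E S"
  unfolding components_in_iff by auto

lemma components_in_empty: "components_in E {} = {}"
  unfolding components_in_def by simp

lemma components_in_eq_component_of:
  assumes "symp E" and C: "C \<in> components_in E S" and y: "y \<in> C"
  shows "C = component_of E S y"
proof -
  obtain x where x: "x \<in> S" "C = component_of E S x"
    using C unfolding components_in_iff by auto
  have xy: "reach_in E S x y" using y x by auto
  have yx: "reach_in E S y x" using reach_in_sym[OF assms(1) xy] .
  have "reach_in E S x z \<longleftrightarrow> reach_in E S y z" for z
    using reach_in_trans[OF xy, of z] reach_in_trans[OF yx, of z] by blast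
  then show ?thesis using x(2) by blast
qed

lemma components_in_disjoint:
  assumes "symp E" "C \<in> components_in E S" "C' \<in> components_in E S" "y \<in> C" "y \<in> C'"
  shows "C = C'"
  using components_in_eq_component_of[OF assms(1,2,4)]
    components_in_eq_component_of[OF assms(1,3,5)]
  by simp

lemma components_in_edge_eq:
  assumes "symp E" and C: "C \<in> components_in E S" and C': "C' \<in> components_in E S"
    and "x \<in> C" "y \<in> C'" "E x y"
  shows "C = C'"
proof -
  have "x \<in> S" "y \<in> S" using components_in_subset[OF C] components_in_subset[OF C'] assms by auto
  then have "y \<in> component_of E S x" using reach_in_edge[of x S y E] \<open>E x y\<close> by simp
  then have "y \<in> C" using components_in_eq_component_of[OF assms(1) C \<open>x \<in> C\<close>] by simp
  then show ?thesis using components_in_disjoint[OF assms(1) C C' _ \<open>y \<in> C'\<close>] by simp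
qed

lemma reach_in_component_of:
  assumes "reach_in E S x y"
  shows "reach_in E (component_of E S x) x y"
proof -
  let ?C = "component_of E S x"
  have "(x, y) \<in> (induced_edges E S)\<^sup>*" using assms by (simp add: reach_in_iff_rtrancl)
  then have "(x, y) \<in> (induced_edges E ?C)\<^sup>*"
  proof (induct rule: rtrancl_induct)
    case base
    show ?case by simp
  next
    case (step y z)
    have "(x, z) \<in> (induced_edges E S)\<^sup>*" using step(1,2) by (rule rtrancl_into_rtrancl)
    then have "(y, z) \<in> induced_edges E ?C"
      using step(1,2) by (simp add: induced_edges_def reach_in_iff_rtrancl)
    then show ?case using step(3) by (rule rtrancl_into_rtrancl[rotated])
  qed
  then show ?thesis using reach_in_iff_rtrancl[of E ?C x y] by blast
qed

lemma connected_in_component: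
  assumes "symp E" and C: "C \<in> components_in E S"
  shows "connected_in E C"
proof -
  obtain x where x: "x \<in> S" and C_eq: "C = component_of E S x"
    using C unfolding components_in_iff by auto
  have "reach_in E C y z" if "y \<in> C" "z \<in> C" for y z
  proof -
    have xy: "reach_in E S x y" and xz: "reach_in E S x z" using that C_eq by auto
    have "reach_in E C x y" "reach_in E C x z"
      unfolding C_eq by (rule reach_in_component_of[OF xy], rule reach_in_component_of[OF xz])
    then show ?thesis using reach_in_trans[OF reach_in_sym[OF assms(1)]] by blast
  qed
  moreover have "x \<in> C" using x C_eq by (simp add: reach_in_refl)
  ultimately show ?thesis unfolding connected_in_def by blast
qed

lemma components_in_connected: "connected_in E S \<Longrightarrow> components_in E S = {S}"
  unfolding connected_in_def components_in_def by auto

lemma connected_in_singleton: "connected_in E {x}"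
  unfolding connected_in_def using reach_in_refl by auto

lemma components_in_independent:
  assumes "\<forall>x\<in>S. \<forall>y\<in>S. \<not> E x y"
  shows "components_in E S = (\<lambda>x. {x}) ` S"
proof -
  have "component_of E S x = {x}" if "x \<in> S" for x
  proof -
    have "reach_in E S x y \<Longrightarrow> y = x" for y
      unfolding reach_in_iff_rtrancl
      by (induct rule: rtrancl_induct) (use assms in \<open>auto simp: induced_edges_def\<close>)
    then show ?thesis using that reach_in_refl by auto
  qed
  then show ?thesis unfolding components_in_def by auto
qed

text \<open>Follow a path from \<open>r\<close> into the component; after its last visit to \<open>r\<close> it stays in
  the component.\<close>

lemma component_has_neighbour:
  assumes "symp E" and conn: "connected_in E S" and r: "r \<in> S"
    and C: "C \<in> components_in E (S - {r})"
  shows "\<exists>y\<in>C. E r y"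
proof -
  obtain c where cS: "c \<in> S - {r}" and C_eq: "C = component_of E (S - {r}) c"
    using C unfolding components_in_iff by blast
  have "z \<noteq> r \<longrightarrow> (\<exists>w\<in>component_of E (S - {r}) z. E r w)"
    if "(r, z) \<in> (induced_edges E S)\<^sup>*" for z
    using that
  proof (induct rule: rtrancl_induct)
    case base
    then show ?case by simp
  next
    case (step y z)
    have yz: "y \<in> S" "z \<in> S" "E y z" using step(2) by (auto simp: induced_edges_def)
    show ?case
    proof
      assume "z \<noteq> r"
      show "\<exists>w\<in>component_of E (S - {r}) z. E r w"
      proof (cases "y = r")
        case True
        then show ?thesis using yz \<open>z \<noteq> r\<close> reach_in_refl[of E "S - {r}" z] by auto
      next
        case False
        then obtain w where w: "w \<in> S - {r}" "reach_in E (S - {r}) y w" "E r w"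
          using step(3) by blast
        have "reach_in E (S - {r}) y z"
          using reach_in_edge[of y "S - {r}" z E] yz False \<open>z \<noteq> r\<close> by simp
        then have "reach_in E (S - {r}) z w"
          using reach_in_trans[OF reach_in_sym[OF assms(1)] w(2)] by simp
        then show ?thesis using w(1,3) by auto
      qed
    qed
  qed
  moreover have "(r, c) \<in> (induced_edges E S)\<^sup>*"
    using conn r cS unfolding connected_in_def reach_in_iff_rtrancl by auto
  ultimately show ?thesis using C_eq cS by auto
qed

section \<open>Parent maps\<close>

definition parent_rel :: "('a \<Rightarrow> 'a option) \<Rightarrow> ('a \<times> 'a) set" where
  "parent_rel f = {(a, b). f a = Some b}"

definition ancestors :: "('a \<Rightarrow> 'a option) \<Rightarrow> 'a \<Rightarrow> 'a set" where
  "ancestors f y = {x. (y, x) \<in> (parent_rel f)\<^sup>+}"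

lemma parent_rel_iff [simp]: "(a, b) \<in> parent_rel f \<longleftrightarrow> f a = Some b"
  by (simp add: parent_rel_def)

lemma mem_subtree_iff: "y \<in> subtree f x \<longleftrightarrow> (y, x) \<in> (parent_rel f)\<^sup>*"
  unfolding subtree_def parent_rel_def by simp

lemma single_valued_parent_rel: "single_valued (parent_rel f)"
  unfolding single_valued_def by simp

lemma ancestors_unfold:
  "ancestors f y = (case f y of None \<Rightarrow> {} | Some z \<Rightarrow> insert z (ancestors f z))"
proof (cases "f y")
  case None
  have "(y, x) \<notin> (parent_rel f)\<^sup>+" for x
  proof
    assume "(y, x) \<in> (parent_rel f)\<^sup>+"
    then obtain z where "(y, z) \<in> parent_rel f" by (meson converse_tranclE)
    then show False using None by simp
  qed
  then show ?thesis using None by (simp add: ancestors_def)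
next
  case (Some z)
  have "(y, x) \<in> (parent_rel f)\<^sup>+ \<longleftrightarrow> x = z \<or> (z, x) \<in> (parent_rel f)\<^sup>+" for x
  proof
    assume "(y, x) \<in> (parent_rel f)\<^sup>+"
    then obtain w where "(y, w) \<in> parent_rel f" "(w, x) \<in> (parent_rel f)\<^sup>*" by (meson tranclD)
    then show "x = z \<or> (z, x) \<in> (parent_rel f)\<^sup>+" using Some by (auto simp: rtrancl_eq_or_trancl)
  next
    assume "x = z \<or> (z, x) \<in> (parent_rel f)\<^sup>+"
    then show "(y, x) \<in> (parent_rel f)\<^sup>+" using Some by (auto intro: trancl_into_trancl2)
  qed
  then show ?thesis using Some by (auto simp: ancestors_def)
qed

lemma rtrancl_parent_rel_None: "f x = None \<Longrightarrow> (x, y) \<in> (parent_rel f)\<^sup>* \<longleftrightarrow> y = x"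
  by (auto elim: converse_rtranclE)

lemma subtree_unfold: "y \<in> subtree f x \<longleftrightarrow> y = x \<or> (\<exists>z. f y = Some z \<and> z \<in> subtree f x)"
proof
  assume "y \<in> subtree f x"
  then have "(y, x) \<in> (parent_rel f)\<^sup>*" by (simp add: mem_subtree_iff)
  then show "y = x \<or> (\<exists>z. f y = Some z \<and> z \<in> subtree f x)"
    by (cases rule: converse_rtranclE) (auto simp: mem_subtree_iff)
next
  assume "y = x \<or> (\<exists>z. f y = Some z \<and> z \<in> subtree f x)"
  then show "y \<in> subtree f x"
    by (auto simp: mem_subtree_iff intro: converse_rtrancl_into_rtrancl)
qed

lemma subtree_self [simp]: "x \<in> subtree f x"
  by (simp add: mem_subtree_iff)

lemma subtree_trans: "y \<in> subtree f x \<Longrightarrow> x \<in> subtree f z \<Longrightarrow> y \<in> subtree f z"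
  by (auto simp: mem_subtree_iff)

lemma child_in_subtree: "f c = Some x \<Longrightarrow> c \<in> subtree f x"
  by (auto simp: mem_subtree_iff)

lemma subtree_child_subset: "f c = Some x \<Longrightarrow> subtree f c \<subseteq> subtree f x"
  using subtree_trans child_in_subtree by fast

lemma subtree_in_child:
  assumes "z \<in> subtree f x" "z \<noteq> x"
  shows "\<exists>c. f c = Some x \<and> z \<in> subtree f c"
proof -
  have "(z, x) \<in> (parent_rel f)\<^sup>+" using assms by (auto simp: mem_subtree_iff rtrancl_eq_or_trancl)
  then obtain c where "(z, c) \<in> (parent_rel f)\<^sup>*" "(c, x) \<in> parent_rel f" by (meson tranclD2)
  then show ?thesis by (auto simp: mem_subtree_iff)
qed

text \<open>Every vertex has at most one parent, so the cycle through \<open>x\<close> is the only way up from \<open>x\<close>.\<close>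

lemma parent_rel_cycle_upward:
  assumes "(x, x) \<in> (parent_rel f)\<^sup>+" "(x, z) \<in> (parent_rel f)\<^sup>*"
  shows "(z, z) \<in> (parent_rel f)\<^sup>+"
  using assms(2,1)
proof (induct rule: rtrancl_induct)
  case base
  then show ?case by simp
next
  case (step y z)
  then obtain y' where y': "(y, y') \<in> parent_rel f" "(y', y) \<in> (parent_rel f)\<^sup>*"
    by (meson tranclD)
  have "y' = z" using y'(1) step(2) by simp
  then show ?case using y'(2) step(2) by (auto intro: rtrancl_into_trancl1)
qed

section \<open>Search trees\<close>

lemma st_subset_subtree:
  assumes "st E f S r"
  shows "r \<in> S \<and> S \<subseteq> subtree f r"
  using assms
proof (induct rule: st.induct)
  case (1 r S)
  have "x \<in> subtree f r" if x: "x \<in> S - {r}" for x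
  proof -
    obtain c where c: "c \<in> component_of E (S - {r}) x" "f c = Some r"
      and below_c: "component_of E (S - {r}) x \<subseteq> subtree f c"
      using 1(2) component_of_in_components[OF x] by blast
    have "x \<in> component_of E (S - {r}) x" using x by (simp add: reach_in_refl)
    then show ?thesis using below_c subtree_child_subset[of f c r] c(2) by blast
  qed
  then show ?case using 1(1) subtree_self[of r f] by blast
qed

lemma st_cong:
  assumes "st E f S r" "\<forall>w\<in>S - {r}. f w = g w"
  shows "st E g S r"
  using assms
proof (induct rule: st.induct)
  case (1 r S)
  show ?case
  proof (rule st.intros)
    show "r \<in> S" by fact
    show "\<forall>C\<in>components_in E (S - {r}). \<exists>c\<in>C. g c = Some r \<and> st E g C c"
    proof
      fix C assume C: "C \<in> components_in E (S - {r})"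
      then obtain c where c: "c \<in> C" "f c = Some r" "\<forall>w\<in>C - {c}. f w = g w \<Longrightarrow> st E g C c"
        using 1(2) by blast
      have CS: "C \<subseteq> S - {r}" using components_in_subset[OF C] .
      then have "c \<in> S - {r}" using c(1) by blast
      then have "g c = Some r" using c(2) 1(3) by simp
      moreover have "st E g C c" using c(3) CS 1(3) by auto
      ultimately show "\<exists>c\<in>C. g c = Some r \<and> st E g C c" using c(1) by blast
    qed
  qed
qed

locale rooted_search_tree =
  fixes E :: "'a \<Rightarrow> 'a \<Rightarrow> bool" and V :: "'a set" and f :: "'a \<Rightarrow> 'a option" and r :: 'a
  assumes sym: "symp E"
    and st_root: "st E f V r"
    and root_None: "f r = None"
    and outside_None: "\<And>x. x \<notin> V \<Longrightarrow> f x = None"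
    and connected: "connected_in E V"
begin

lemma V_eq_subtree_root: "V = subtree f r"
proof
  show "V \<subseteq> subtree f r" using st_subset_subtree[OF st_root] by simp
next
  show "subtree f r \<subseteq> V"
  proof
    fix x assume "x \<in> subtree f r"
    then have "x = r \<or> (\<exists>z. f x = Some z)" by (auto simp: subtree_unfold[of x])
    then show "x \<in> V" using st_subset_subtree[OF st_root] outside_None by force
  qed
qed

lemma parent_rel_acyclic: "(x, x) \<notin> (parent_rel f)\<^sup>+"
proof
  assume xx: "(x, x) \<in> (parent_rel f)\<^sup>+"
  then obtain y where "(x, y) \<in> parent_rel f" by (meson converse_tranclE)
  then have "x \<in> V" using outside_None by force
  then have "(x, r) \<in> (parent_rel f)\<^sup>*" using V_eq_subtree_root by (simp add: mem_subtree_iff)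
  then have "(r, r) \<in> (parent_rel f)\<^sup>+" using parent_rel_cycle_upward[OF xx] by simp
  then obtain z where "(r, z) \<in> parent_rel f" by (meson converse_tranclE)
  then show False using root_None by simp
qed

lemma ancestors_iff: "x \<in> ancestors f y \<longleftrightarrow> y \<in> subtree f x \<and> y \<noteq> x"
  using parent_rel_acyclic[of y]
  unfolding ancestors_def mem_subtree_iff by (auto simp: rtrancl_eq_or_trancl)

lemma parent_in_V:
  assumes "f x = Some y"
  shows "x \<in> V" "y \<in> V"
proof -
  show xV: "x \<in> V" using assms outside_None by force
  then have "x = r \<or> (\<exists>z. f x = Some z \<and> z \<in> subtree f r)"
    using V_eq_subtree_root subtree_unfold[of x f r] by simp
  then show "y \<in> V" using assms root_None V_eq_subtree_root by auto
qed

lemma child_neq_parent: "f c = Some x \<Longrightarrow> c \<noteq> x"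
  using parent_rel_acyclic[of c] by auto

lemma parent_notin_subtree_child: "f c = Some x \<Longrightarrow> x \<notin> subtree f c"
  using parent_rel_acyclic[of c] by (auto simp: mem_subtree_iff intro: rtrancl_into_trancl2)

lemma child_eq_if_in_subtree:
  assumes "f c = Some x" "f c' = Some x" "c \<in> subtree f c'"
  shows "c = c'"
proof (rule ccontr)
  assume "c \<noteq> c'"
  then have "x \<in> subtree f c'" using assms(1,3) subtree_unfold[of c f c'] by auto
  then show False using parent_notin_subtree_child[OF assms(2)] by simp
qed

lemma subtree_child_eq_component:
  assumes S: "S = subtree f x"
    and children: "\<forall>C\<in>components_in E (S - {x}). \<exists>c\<in>C. f c = Some x \<and> st E f C c"
    and C: "C \<in> components_in E (S - {x})" and c: "c \<in> C" "f c = Some x" "st E f C c"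
  shows "subtree f c = C"
proof
  show "C \<subseteq> subtree f c" using st_subset_subtree[OF c(3)] by simp
next
  show "subtree f c \<subseteq> C"
  proof
    fix z assume z: "z \<in> subtree f c"
    have "z \<in> subtree f x" using subtree_child_subset[of f c x] c(2) z by blast
    moreover have "z \<noteq> x" using z parent_notin_subtree_child[OF c(2)] by auto
    ultimately have zS: "z \<in> S - {x}" using S by simp
    let ?C' = "component_of E (S - {x}) z"
    have C': "?C' \<in> components_in E (S - {x})" by (rule component_of_in_components[OF zS])
    have zC': "z \<in> ?C'" using zS by (simp add: reach_in_refl)
    obtain c' where c': "c' \<in> ?C'" "f c' = Some x" "st E f ?C' c'" using children C' by blast
    have "z \<in> subtree f c'" using st_subset_subtree[OF c'(3)] zC' by blast
    then have "(z, c) \<in> (parent_rel f)\<^sup>*" "(z, c') \<in> (parent_rel f)\<^sup>*"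
      using z by (simp_all add: mem_subtree_iff)
    then have "(c, c') \<in> (parent_rel f)\<^sup>* \<or> (c', c) \<in> (parent_rel f)\<^sup>*"
      by (rule single_valued_confluent[OF single_valued_parent_rel])
    then have "c = c'"
      using child_eq_if_in_subtree[OF c(2) c'(2)] child_eq_if_in_subtree[OF c'(2) c(2)]
      by (auto simp: mem_subtree_iff)
    then have "C = ?C'" using components_in_disjoint[OF sym C C'] c(1) c'(1) by simp
    then show "z \<in> C" using zC' by simp
  qed
qed

lemma components_eq_child_subtrees:
  assumes S: "S = subtree f x"
    and children: "\<forall>C\<in>components_in E (S - {x}). \<exists>c\<in>C. f c = Some x \<and> st E f C c"
  shows "components_in E (S - {x}) = {subtree f c | c. f c = Some x}"
proof
  show "components_in E (S - {x}) \<subseteq> {subtree f c | c. f c = Some x}"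
  proof
    fix C assume C: "C \<in> components_in E (S - {x})"
    then obtain c where c: "c \<in> C" "f c = Some x" "st E f C c" using children by blast
    then have "subtree f c = C" by (rule subtree_child_eq_component[OF S children C])
    then show "C \<in> {subtree f c | c. f c = Some x}" using c(2) by blast
  qed
next
  show "{subtree f c | c. f c = Some x} \<subseteq> components_in E (S - {x})"
  proof
    fix D assume "D \<in> {subtree f c | c. f c = Some x}"
    then obtain c where D: "D = subtree f c" and fc: "f c = Some x" by blast
    have cS: "c \<in> S - {x}" using child_in_subtree[of f c x, OF fc] S child_neq_parent[OF fc] by simp
    let ?C = "component_of E (S - {x}) c"
    have C: "?C \<in> components_in E (S - {x})" by (rule component_of_in_components[OF cS])
    have cC: "c \<in> ?C" using cS by (simp add: reach_in_refl)
    obtain c' where c': "c' \<in> ?C" "f c' = Some x" "st E f ?C c'" using children C by blast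
    have C_eq: "subtree f c' = ?C" by (rule subtree_child_eq_component[OF S children C c'])
    then have "c \<in> subtree f c'" using cC by (simp only:)
    then have "c = c'" by (rule child_eq_if_in_subtree[OF fc c'(2)])
    then have "D = ?C" using D C_eq by (simp only:)
    then show "D \<in> components_in E (S - {x})" using C by (simp only:)
  qed
qed

lemma st_subtree_structure:
  assumes "st E f S x" "S = subtree f x" "connected_in E S" "y \<in> S"
  shows "connected_in E (subtree f y) \<and>
    components_in E (subtree f y - {y}) = {subtree f c | c. f c = Some y}"
  using assms
proof (induct arbitrary: y rule: st.induct)
  case (1 x S)
  have children: "\<forall>C\<in>components_in E (S - {x}). \<exists>c\<in>C. f c = Some x \<and> st E f C c"
    using 1(2) by meson
  show ?case
  proof (cases "y = x")
    case True
    then show ?thesis using 1(3,4) components_eq_child_subtrees[OF 1(3) children] by simp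
  next
    case False
    let ?C = "component_of E (S - {x}) y"
    have yS: "y \<in> S - {x}" using 1(5) False by simp
    have C: "?C \<in> components_in E (S - {x})" by (rule component_of_in_components[OF yS])
    obtain c where c: "c \<in> ?C" "f c = Some x" "st E f ?C c"
      and IH: "?C = subtree f c \<longrightarrow> connected_in E ?C \<longrightarrow> (\<forall>z. z \<in> ?C \<longrightarrow>
        connected_in E (subtree f z) \<and>
        components_in E (subtree f z - {z}) = {subtree f c | c. f c = Some z})"
      using bspec[OF 1(2) C] by blast
    have "subtree f c = ?C" by (rule subtree_child_eq_component[OF 1(3) children C c])
    moreover have "connected_in E ?C" by (rule connected_in_component[OF sym C])
    moreover have "y \<in> ?C" using yS by (simp add: reach_in_refl)
    ultimately show ?thesis using IH by simp
  qed
qed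

lemma connected_in_subtree: "y \<in> V \<Longrightarrow> connected_in E (subtree f y)"
  using st_subtree_structure[OF st_root V_eq_subtree_root connected] by (rule conjunct1)

lemma components_subtree_minus:
  "y \<in> V \<Longrightarrow> components_in E (subtree f y - {y}) = {subtree f c | c. f c = Some y}"
  using st_subtree_structure[OF st_root V_eq_subtree_root connected] by (rule conjunct2)

lemma subtree_child_in_components:
  assumes "f c = Some x"
  shows "subtree f c \<in> components_in E (subtree f x - {x})"
  unfolding components_subtree_minus[OF parent_in_V(2)[OF assms]] using assms by blast

lemma siblings_no_edge:
  assumes "f c = Some x" "f c' = Some x" "c \<noteq> c'" "a \<in> subtree f c" "b \<in> subtree f c'"
  shows "\<not> E a b"
proof
  assume "E a b"
  with assms have "subtree f c = subtree f c'"
    using components_in_edge_eq[OF sym subtree_child_in_components subtree_child_in_components]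
    by blast
  then show False using child_eq_if_in_subtree[OF assms(1,2)] assms(3) subtree_self[of c f] by simp
qed

lemma subtree_child_has_neighbour:
  assumes "f c = Some x"
  shows "\<exists>y\<in>subtree f c. E x y"
  using component_has_neighbour[OF sym connected_in_subtree[OF parent_in_V(2)[OF assms]]
      subtree_self subtree_child_in_components[OF assms]] .

end

section \<open>Rotations\<close>

locale rotation = rooted_search_tree +
  fixes u v :: 'a
  assumes child_v: "f v = Some u"
    and search_tree_rotate: "search_tree E V (rotate E f u v)"
begin

abbreviation g :: "'a \<Rightarrow> 'a option" where
  "g \<equiv> rotate E f u v"

text \<open>The subtrees of children of \<open>v\<close> without a neighbour of \<open>u\<close>: the rotation leaves them
  below \<open>v\<close>, so they stop being below \<open>u\<close>.\<close>

definition detached :: "'a set" where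
  "detached = {y. \<exists>c. f c = Some v \<and> (\<forall>z\<in>subtree f c. \<not> E u z) \<and> y \<in> subtree f c}"

definition new_ancestors :: "'a \<Rightarrow> 'a set" where
  "new_ancestors y = (ancestors f y - (if y = v \<or> y \<in> detached then {u} else {})) \<union>
     (if y \<in> subtree f u \<and> y \<notin> subtree f v then {v} else {})"

lemma rotate_apply: "g y = (if y = v then f u else if y = u then Some v
     else if f y = Some v then (if \<exists>z\<in>subtree f y. E u z then Some u else Some v) else f y)"
  unfolding rotate_def by simp

lemma u_neq_v: "u \<noteq> v"
  using child_neq_parent[OF child_v] by simp

lemma u_notin_subtree_v: "u \<notin> subtree f v"
  using parent_notin_subtree_child[OF child_v] .

lemma ancestors_v: "ancestors f v = insert u (ancestors f u)"
  using ancestors_unfold[of f v] child_v by simp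

lemma u_notin_ancestors_u: "u \<notin> ancestors f u"
  using ancestors_iff by simp

lemma detached_subset: "detached \<subseteq> subtree f v"
  unfolding detached_def using subtree_child_subset[of f _ v] by blast

lemma u_notin_detached: "u \<notin> detached"
  using detached_subset u_notin_subtree_v by blast

lemma new_ancestors_v: "new_ancestors v = ancestors f u"
  using ancestors_v u_notin_ancestors_u by (auto simp: new_ancestors_def)

lemma new_ancestors_u: "new_ancestors u = insert v (ancestors f u)"
  using u_neq_v u_notin_subtree_v u_notin_detached by (auto simp: new_ancestors_def)

lemma ancestors_rotate_step_v:
  assumes IH: "\<And>z. g v = Some z \<Longrightarrow> ancestors g z = new_ancestors z"
  shows "ancestors g v = new_ancestors v"
proof (cases "f u")
  case None
  then show ?thesis
    using ancestors_unfold[of f u] ancestors_unfold[of g v] rotate_apply[of v] new_ancestors_v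
    by simp
next
  case (Some w)
  have gv: "g v = Some w" using rotate_apply[of v] Some by simp
  have w_sub_u: "w \<notin> subtree f u" using parent_notin_subtree_child[OF Some] .
  then have "w \<notin> subtree f v" using subtree_child_subset[of f v u] child_v by blast
  then have "w \<noteq> v" "w \<notin> detached" using detached_subset by auto
  moreover have "u \<notin> ancestors f w" using w_sub_u ancestors_iff by simp
  ultimately have "new_ancestors w = ancestors f w" using w_sub_u by (auto simp: new_ancestors_def)
  then have "ancestors g v = insert w (ancestors f w)"
    using ancestors_unfold[of g v] gv IH[OF gv] by simp
  also have "\<dots> = ancestors f u" using ancestors_unfold[of f u] Some by simp
  finally show ?thesis using new_ancestors_v by simp
qed

lemma ancestors_rotate_step_u:
  assumes IH: "\<And>z. g u = Some z \<Longrightarrow> ancestors g z = new_ancestors z"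
  shows "ancestors g u = new_ancestors u"
proof -
  have gu: "g u = Some v" using rotate_apply[of u] u_neq_v by simp
  then have "ancestors g u = insert v (ancestors g v)" using ancestors_unfold[of g u] by simp
  also have "\<dots> = insert v (ancestors f u)" using IH[OF gu] new_ancestors_v by simp
  finally show ?thesis using new_ancestors_u by simp
qed

lemma ancestors_rotate_step_child_v:
  assumes y: "y \<noteq> v" "y \<noteq> u" "f y = Some v"
    and IH: "\<And>z. g y = Some z \<Longrightarrow> ancestors g z = new_ancestors z"
  shows "ancestors g y = new_ancestors y"
proof -
  have anc_y: "ancestors f y = insert v (insert u (ancestors f u))"
    using ancestors_unfold[of f y] y(3) ancestors_v by simp
  have y_sub_v: "y \<in> subtree f v" using child_in_subtree[of f y v] y(3) by simp
  show ?thesis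
  proof (cases "\<exists>z\<in>subtree f y. E u z")
    case True
    have gy: "g y = Some u" using rotate_apply[of y] y True by simp
    have "y \<notin> detached"
    proof
      assume "y \<in> detached"
      then obtain c where c: "f c = Some v" "\<forall>z\<in>subtree f c. \<not> E u z" "y \<in> subtree f c"
        unfolding detached_def by blast
      have "y = c" using child_eq_if_in_subtree[OF y(3) c(1) c(3)] .
      then show False using True c(2) by blast
    qed
    moreover have "ancestors g y = insert u (insert v (ancestors f u))"
      using ancestors_unfold[of g y] gy IH[OF gy] new_ancestors_u by simp
    ultimately show ?thesis using y_sub_v y anc_y by (auto simp: new_ancestors_def)
  next
    case False
    have gy: "g y = Some v" using rotate_apply[of y] y False by simp
    have "y \<in> detached" unfolding detached_def using y(3) False subtree_self[of y f] by blast
    moreover have "ancestors g y = insert v (ancestors f u)"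
      using ancestors_unfold[of g y] gy IH[OF gy] new_ancestors_v by simp
    ultimately show ?thesis using y_sub_v anc_y u_neq_v u_notin_ancestors_u
      by (auto simp: new_ancestors_def)
  qed
qed

lemma ancestors_rotate_step_other:
  assumes y: "y \<noteq> v" "y \<noteq> u" "f y \<noteq> Some v"
    and IH: "\<And>z. g y = Some z \<Longrightarrow> ancestors g z = new_ancestors z"
  shows "ancestors g y = new_ancestors y"
proof -
  have gy: "g y = f y" using rotate_apply[of y] y by simp
  show ?thesis
  proof (cases "f y")
    case None
    then have "y \<notin> subtree f u" using subtree_unfold[of y f u] y by simp
    then show ?thesis
      using None gy ancestors_unfold[of f y] ancestors_unfold[of g y]
        by (simp add: new_ancestors_def)
  next
    case (Some z)
    have anc_f: "ancestors f y = insert z (ancestors f z)" using ancestors_unfold[of f y] Some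
      by simp
    have anc_g: "ancestors g y = insert z (new_ancestors z)"
      using ancestors_unfold[of g y] Some gy IH[of z] by simp
    show ?thesis
    proof (cases "z = u")
      case True
      have "y \<notin> subtree f v"
        using child_eq_if_in_subtree[of y u v] Some True child_v y(1) by auto
      moreover have "y \<in> subtree f u" using child_in_subtree[of f y u] Some True by simp
      ultimately show ?thesis
        using anc_g anc_f True new_ancestors_u detached_subset y by (auto simp: new_ancestors_def)
    next
      case False
      have "z \<noteq> v" using Some y(3) by simp
      have same_side: "y \<in> subtree f w \<longleftrightarrow> z \<in> subtree f w" if "w \<noteq> y" for w
        using subtree_unfold[of y f w] Some that by auto
      have "y \<in> subtree f c \<longleftrightarrow> z \<in> subtree f c" if "f c = Some v" for c
        using same_side[of c] that y(3) by auto
      then have "y \<in> detached \<longleftrightarrow> z \<in> detached" unfolding detached_def by blast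
      then show ?thesis using anc_g anc_f same_side[of u] same_side[of v] False \<open>z \<noteq> v\<close> y
        by (auto simp: new_ancestors_def)
    qed
  qed
qed

lemma ancestors_rotate_step:
  assumes IH: "\<And>z. g y = Some z \<Longrightarrow> ancestors g z = new_ancestors z"
  shows "ancestors g y = new_ancestors y"
proof -
  consider "y = v" | "y = u" | "y \<noteq> v" "y \<noteq> u" "f y = Some v" | "y \<noteq> v" "y \<noteq> u" "f y \<noteq> Some v"
    by blast
  then show ?thesis
  proof cases
    case 1
    show ?thesis unfolding 1 by (rule ancestors_rotate_step_v) (rule IH[unfolded 1])
  next
    case 2
    show ?thesis unfolding 2 by (rule ancestors_rotate_step_u) (rule IH[unfolded 2])
  next
    case 3
    show ?thesis by (rule ancestors_rotate_step_child_v[OF 3 IH])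
  next
    case 4
    show ?thesis by (rule ancestors_rotate_step_other[OF 4 IH])
  qed
qed

lemma ancestors_rotate: "ancestors g y = new_ancestors y"
proof -
  obtain rg where rg: "st E g V rg" "g rg = None" and outside_g: "\<forall>x. x \<notin> V \<longrightarrow> g x = None"
    using search_tree_rotate unfolding search_tree_def by blast
  show ?thesis
  proof (cases "y \<in> V")
    case False
    then have "g y = None" using outside_g by simp
    show ?thesis by (rule ancestors_rotate_step) (simp add: \<open>g y = None\<close>)
  next
    case True
    then have "(y, rg) \<in> (parent_rel g)\<^sup>*"
      using st_subset_subtree[OF rg(1)] by (auto simp: mem_subtree_iff)
    then show ?thesis
    proof (induct rule: converse_rtrancl_induct)
      case base
      show ?case by (rule ancestors_rotate_step) (simp add: rg(2))
    next
      case (step y z)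
      then have "g y = Some z" by simp
      show ?case by (rule ancestors_rotate_step) (use step(3) \<open>g y = Some z\<close> in simp)
    qed
  qed
qed

lemma ancestors_rotate_other:
  "x \<noteq> u \<Longrightarrow> x \<noteq> v \<Longrightarrow> x \<in> ancestors g y \<longleftrightarrow> x \<in> ancestors f y"
  by (simp add: ancestors_rotate new_ancestors_def)

lemma v_in_ancestors_rotate:
  "v \<in> ancestors g y \<longleftrightarrow> v \<in> ancestors f y \<or> (y \<in> subtree f u \<and> y \<notin> subtree f v)"
  using u_neq_v by (auto simp: ancestors_rotate new_ancestors_def)

lemma u_in_ancestors_rotate:
  "u \<in> ancestors g y \<longleftrightarrow> u \<in> ancestors f y \<and> y \<noteq> v \<and> y \<notin> detached"
  using u_neq_v by (auto simp: ancestors_rotate new_ancestors_def)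

text \<open>Twins: when \<open>u\<close> and \<open>v\<close> have the same neighbours, \<open>v\<close> is the only child of \<open>u\<close> and all of
  its children stay below \<open>u\<close>; the rotation just swaps \<open>u\<close> and \<open>v\<close>.\<close>

lemma ancestors_rotate_twins:
  assumes twins: "\<And>z. E u z \<longleftrightarrow> E v z"
  shows "x \<in> ancestors g y \<longleftrightarrow> x \<in> ancestors f y \<and> (x, y) \<noteq> (u, v) \<or> (x, y) = (v, u)"
proof -
  have "detached = {}"
  proof (rule equals0I)
    fix y assume "y \<in> detached"
    then obtain c where c: "f c = Some v" and no_nb: "\<forall>z\<in>subtree f c. \<not> E u z"
      unfolding detached_def by blast
    obtain z where "z \<in> subtree f c" "E v z" using subtree_child_has_neighbour[OF c] by blast
    then show False using no_nb twins[of z] by blast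
  qed
  moreover have "y = u" if y: "y \<in> subtree f u" "y \<notin> subtree f v"
  proof (rule ccontr)
    assume "y \<noteq> u"
    then obtain c where c: "f c = Some u" "y \<in> subtree f c" using subtree_in_child[OF y(1)] by blast
    then have "c \<noteq> v" using y(2) by blast
    obtain z where z: "z \<in> subtree f c" "E u z" using subtree_child_has_neighbour[OF c(1)] by blast
    then have "E v z" using twins by blast
    then have "E z v" by (rule sympD[OF sym])
    then show False using siblings_no_edge[OF c(1) child_v \<open>c \<noteq> v\<close> z(1) subtree_self] by blast
  qed
  ultimately have "new_ancestors y =
      (ancestors f y - (if y = v then {u} else {})) \<union> (if y = u then {v} else {})"
    using u_notin_subtree_v unfolding new_ancestors_def by auto
  moreover have "v \<notin> ancestors f u" using ancestors_iff u_notin_subtree_v by simp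
  ultimately show ?thesis using ancestors_rotate[of y] u_neq_v by auto
qed

lemma detached_no_neighbour:
  assumes "y \<in> detached" "x \<in> subtree f y"
  shows "\<not> E u x"
proof -
  obtain c where "\<forall>z\<in>subtree f c. \<not> E u z" "y \<in> subtree f c"
    using assms(1) unfolding detached_def by blast
  then show ?thesis using subtree_trans[OF assms(2)] by blast
qed

lemma adjacent_to_detached:
  assumes y: "y \<in> detached" and x: "x \<in> subtree f u" "x \<noteq> u" and "E x y" "E u x"
  shows "x = v"
proof -
  obtain c0 where c0: "f c0 = Some v" "\<forall>z\<in>subtree f c0. \<not> E u z" "y \<in> subtree f c0"
    using y unfolding detached_def by blast
  obtain c where c: "f c = Some u" "x \<in> subtree f c" using subtree_in_child[OF x] by blast
  have "y \<in> subtree f v" using y detached_subset by blast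
  then have "c = v" using siblings_no_edge[OF c(1) child_v _ c(2)] \<open>E x y\<close> by blast
  show "x = v"
  proof (rule ccontr)
    assume "x \<noteq> v"
    then obtain c' where c': "f c' = Some v" "x \<in> subtree f c'"
      using subtree_in_child[of x f v] c(2) \<open>c = v\<close> by blast
    have "c' \<noteq> c0" using c'(2) c0(2) \<open>E u x\<close> by blast
    then show False using siblings_no_edge[OF c'(1) c0(1) _ c'(2) c0(3)] \<open>E x y\<close> by blast
  qed
qed

lemma outside_v_in_sibling:
  assumes "y \<in> subtree f u" "y \<notin> subtree f v" "y \<noteq> u"
  obtains c where "f c = Some u" "c \<noteq> v" "y \<in> subtree f c"
  using subtree_in_child[OF assms(1,3)] assms(2) by blast

lemma adjacent_to_v_in_subtree_v:
  assumes "y \<in> subtree f u" "y \<noteq> u" "E y v"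
  shows "y \<in> subtree f v"
proof (rule ccontr)
  assume "y \<notin> subtree f v"
  then obtain c where "f c = Some u" "c \<noteq> v" "y \<in> subtree f c"
    using outside_v_in_sibling assms(1,2) by blast
  then show False using siblings_no_edge[OF _ child_v _ _ subtree_self] assms(3) by blast
qed

end

section \<open>The potential\<close>

definition absdiff :: "nat \<Rightarrow> nat \<Rightarrow> nat" where
  "absdiff a b = (a - b) + (b - a)"

lemma absdiff_commute: "absdiff a b = absdiff b a"
  by (simp add: absdiff_def)

lemma absdiff_le_iff: "absdiff a b \<le> c \<longleftrightarrow> a \<le> b + c \<and> b \<le> a + c"
  by (auto simp: absdiff_def)

text \<open>The indices in \<open>Z\<close> are paid for in full (count down to \<open>0\<close>, then up to the target), and
  in exchange the inversions among them are free.\<close>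

definition cost :: "(nat \<Rightarrow> nat) \<Rightarrow> (nat \<Rightarrow> nat) \<Rightarrow> nat set \<Rightarrow> nat \<Rightarrow> nat" where
  "cost m N Z i = (if i \<in> Z then N i + m i else absdiff (N i) (m i))"

definition potential_at ::
    "nat \<Rightarrow> (nat \<Rightarrow> nat) \<Rightarrow> (nat \<Rightarrow> nat) \<Rightarrow> (nat \<times> nat) set \<Rightarrow> nat set \<Rightarrow> nat" where
  "potential_at q m N W Z = 2 * (\<Sum>i<q. cost m N Z i) + card (W - Z \<times> Z)"

definition potential :: "nat \<Rightarrow> (nat \<Rightarrow> nat) \<Rightarrow> (nat \<Rightarrow> nat) \<Rightarrow> (nat \<times> nat) set \<Rightarrow> nat" where
  "potential q m N W = Min (potential_at q m N W ` Pow {..<q})"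

lemma potential_le_potential_at: "Z \<subseteq> {..<q} \<Longrightarrow> potential q m N W \<le> potential_at q m N W Z"
  unfolding potential_def by (intro Min_le) auto

lemma potential_attained:
  obtains Z where "Z \<subseteq> {..<q}" "potential q m N W = potential_at q m N W Z"
proof -
  have "potential q m N W \<in> potential_at q m N W ` Pow {..<q}"
    unfolding potential_def by (rule Min_in) auto
  then show ?thesis using that by blast
qed

lemma potential_ge:
  assumes "\<And>Z. Z \<subseteq> {..<q} \<Longrightarrow> c \<le> potential_at q m N W Z"
  shows "c \<le> potential q m N W"
  using assms potential_attained[of q m N W] by metis

lemma potential_le_plus:
  assumes "\<And>Z. Z \<subseteq> {..<q} \<Longrightarrow> \<exists>Z'\<subseteq>{..<q}. potential_at q m N' W' Z' \<le> potential_at q m N W Z + c"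
  shows "potential q m N' W' \<le> potential q m N W + c"
proof -
  obtain Z where Z: "Z \<subseteq> {..<q}" "potential q m N W = potential_at q m N W Z"
    by (rule potential_attained)
  obtain Z' where "Z' \<subseteq> {..<q}" "potential_at q m N' W' Z' \<le> potential_at q m N W Z + c"
    using assms[OF Z(1)] by blast
  then show ?thesis using potential_le_potential_at[of Z' q m N' W'] Z(2) by simp
qed

lemma potential_at_pair_change:
  assumes N: "\<forall>i<q. N i = N' i" and W': "W' \<subseteq> {..<q} \<times> {..<q}"
    and W: "W - {(a, b), (b, a)} = W' - {(a, b), (b, a)}"
  shows "potential_at q m N W Z \<le> potential_at q m N' W' Z + 2"
proof -
  have "(\<Sum>i<q. cost m N Z i) = (\<Sum>i<q. cost m N' Z i)"
    using N by (intro sum.cong) (auto simp: cost_def)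
  moreover have "card (W - Z \<times> Z) \<le> card (W' - Z \<times> Z) + 2"
  proof -
    let ?P = "{(a, b), (b, a)}"
    have "W - Z \<times> Z \<subseteq> (W - ?P - Z \<times> Z) \<union> ?P" by blast
    then have "W - Z \<times> Z \<subseteq> (W' - Z \<times> Z) \<union> ?P" unfolding W by blast
    moreover have "finite (W' - Z \<times> Z)" using W' by (rule finite_subset[THEN finite_Diff]) simp
    ultimately have "card (W - Z \<times> Z) \<le> card ((W' - Z \<times> Z) \<union> ?P)"
      by (intro card_mono) auto
    moreover have "card ((W' - Z \<times> Z) \<union> ?P) \<le> card (W' - Z \<times> Z) + card ?P"
      by (rule card_Un_le)
    moreover have "card ?P \<le> 2" by (cases "a = b") (simp_all add: card_insert_if)
    ultimately show ?thesis by linarith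
  qed
  ultimately show ?thesis unfolding potential_at_def by linarith
qed

lemma potential_pair_change:
  assumes "\<forall>i<q. N i = N' i"
    and "W \<subseteq> {..<q} \<times> {..<q}" "W' \<subseteq> {..<q} \<times> {..<q}"
    and "W - {(a, b), (b, a)} = W' - {(a, b), (b, a)}"
  shows "absdiff (potential q m N W) (potential q m N' W') \<le> 2"
proof -
  have "potential_at q m N W Z \<le> potential_at q m N' W' Z + 2"
    "potential_at q m N' W' Z \<le> potential_at q m N W Z + 2" for Z
    using assms by (intro potential_at_pair_change; auto)+
  then have "potential q m N W \<le> potential q m N' W' + 2"
    "potential q m N' W' \<le> potential q m N W + 2"
    by (intro potential_le_plus; blast)+
  then show ?thesis unfolding absdiff_def by linarith
qed

lemma cost_reset_le:
  assumes "N i \<le> N' i + d" "N' i \<le> N i + d" "i \<in> Y \<Longrightarrow> N' i = 0"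
  shows "cost m N' (Z \<union> Y) i \<le> cost m N Z i + d" "cost m N (Z \<union> Y) i \<le> cost m N' Z i + d"
  using assms unfolding cost_def absdiff_def by (cases "i \<in> Y"; cases "i \<in> Z"; simp)+

lemma sum_cost_reset_le:
  assumes b: "b < q" and N: "\<forall>i<q. i \<noteq> b \<longrightarrow> N i = N' i" and Nb: "absdiff (N b) (N' b) \<le> 1"
    and N'_Y: "\<forall>i\<in>Y. N' i = 0"
  shows "(\<Sum>i<q. cost m N' (Z \<union> Y) i) \<le> (\<Sum>i<q. cost m N Z i) + 1"
    and "(\<Sum>i<q. cost m N (Z \<union> Y) i) \<le> (\<Sum>i<q. cost m N' Z i) + 1"
proof -
  let ?d = "\<lambda>i. if i = b then 1 else 0 :: nat"
  have cost: "cost m N' (Z \<union> Y) i \<le> cost m N Z i + ?d i"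
    "cost m N (Z \<union> Y) i \<le> cost m N' Z i + ?d i" if "i < q" for i
  proof -
    have "N i \<le> N' i + ?d i" "N' i \<le> N i + ?d i"
      using that N Nb unfolding absdiff_def by auto
    then show "cost m N' (Z \<union> Y) i \<le> cost m N Z i + ?d i"
      "cost m N (Z \<union> Y) i \<le> cost m N' Z i + ?d i"
      by (rule cost_reset_le, use N'_Y in blast)+
  qed
  have sum_d: "(\<Sum>i<q. c i + ?d i) = (\<Sum>i<q. c i) + 1" for c :: "nat \<Rightarrow> nat"
    using b by (simp add: sum.distrib)
  show "(\<Sum>i<q. cost m N' (Z \<union> Y) i) \<le> (\<Sum>i<q. cost m N Z i) + 1"
    unfolding sum_d[symmetric] using cost(1) by (intro sum_mono) simp
  show "(\<Sum>i<q. cost m N (Z \<union> Y) i) \<le> (\<Sum>i<q. cost m N' Z i) + 1"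
    unfolding sum_d[symmetric] using cost(2) by (intro sum_mono) simp
qed

lemma card_diff_square_reset_le:
  assumes "finite W" and W: "W - Y \<times> Y = W' - Y \<times> Y"
  shows "card (W' - (Z \<union> Y) \<times> (Z \<union> Y)) \<le> card (W - Z \<times> Z)"
proof (rule card_mono)
  show "finite (W - Z \<times> Z)" using assms(1) by simp
  have "W' - (Z \<union> Y) \<times> (Z \<union> Y) \<subseteq> (W' - Y \<times> Y) - Z \<times> Z" by blast
  also have "\<dots> = (W - Y \<times> Y) - Z \<times> Z" by (simp only: W)
  finally show "W' - (Z \<union> Y) \<times> (Z \<union> Y) \<subseteq> W - Z \<times> Z" by blast
qed

text \<open>Resetting the indices \<open>Y\<close>, where one of the two count functions vanishes, absorbs every
  change of inversions inside \<open>Y\<close>.\<close>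

lemma potential_reset:
  assumes b: "b < q" and N: "\<forall>i<q. i \<noteq> b \<longrightarrow> N i = N' i" and Nb: "absdiff (N b) (N' b) \<le> 1"
    and Y: "Y \<subseteq> {..<q}" and N'_Y: "\<forall>i\<in>Y. N' i = 0"
    and W_sub: "W \<subseteq> {..<q} \<times> {..<q}" "W' \<subseteq> {..<q} \<times> {..<q}"
    and W: "W - Y \<times> Y = W' - Y \<times> Y"
  shows "absdiff (potential q m N W) (potential q m N' W') \<le> 2"
proof -
  have "finite W" "finite W'" using W_sub by (auto intro: finite_subset)
  then have "potential_at q m N' W' (Z \<union> Y) \<le> potential_at q m N W Z + 2"
    "potential_at q m N W (Z \<union> Y) \<le> potential_at q m N' W' Z + 2" for Z
    using sum_cost_reset_le[OF b N Nb N'_Y, of m Z]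
      card_diff_square_reset_le[OF \<open>finite W\<close> W, of Z]
      card_diff_square_reset_le[OF \<open>finite W'\<close> W[symmetric], of Z]
    unfolding potential_at_def by linarith+
  moreover have "Z \<union> Y \<subseteq> {..<q}" if "Z \<subseteq> {..<q}" for Z using that Y by blast
  ultimately have "potential q m N' W' \<le> potential q m N W + 2"
    "potential q m N W \<le> potential q m N' W' + 2"
    by (intro potential_le_plus; blast)+
  then show ?thesis unfolding absdiff_def by linarith
qed

section \<open>Rotations in the complete bipartite graph\<close>

lemma Kpq_adj_simps [simp]:
  "Kpq_adj (Inl a) (Inr b)" "Kpq_adj (Inr b) (Inl a)"
  "\<not> Kpq_adj (Inl a) (Inl a')" "\<not> Kpq_adj (Inr b) (Inr b')"
  by (auto simp: Kpq_adj_def)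

lemma symp_Kpq_adj: "symp Kpq_adj"
  by (auto simp: symp_def Kpq_adj_def)

lemma Kpq_verts_iff: "x \<in> Kpq_verts p q \<longleftrightarrow> (\<exists>j<p. x = Inl j) \<or> (\<exists>i<q. x = Inr i)"
  unfolding Kpq_verts_def by auto

lemma connected_in_Kpq:
  assumes a: "Inl a \<in> S" and b: "Inr b \<in> S"
  shows "connected_in Kpq_adj S"
proof -
  have to_a: "reach_in Kpq_adj S x (Inl a)" if x: "x \<in> S" for x
  proof (cases x)
    case (Inl j)
    then have "reach_in Kpq_adj S x (Inr b)" using reach_in_edge[of x S "Inr b"] x b by simp
    then show ?thesis using reach_in_step[of Kpq_adj S x "Inr b" "Inl a"] a b by simp
  next
    case (Inr i)
    then show ?thesis using reach_in_edge[of x S "Inl a"] x a by simp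
  qed
  have "reach_in Kpq_adj S x y" if "x \<in> S" "y \<in> S" for x y
    using reach_in_trans[OF to_a[OF that(1)] reach_in_sym[OF symp_Kpq_adj to_a[OF that(2)]]] .
  then show ?thesis unfolding connected_in_def using a by blast
qed

lemma connected_in_Kpq_verts: "0 < p \<Longrightarrow> 0 < q \<Longrightarrow> connected_in Kpq_adj (Kpq_verts p q)"
  by (rule connected_in_Kpq[of 0 _ 0]) (auto simp: Kpq_verts_def)

definition below_count :: "nat \<Rightarrow> (nat + nat \<Rightarrow> (nat + nat) option) \<Rightarrow> nat \<Rightarrow> nat" where
  "below_count p T i = card {j. j < p \<and> Inr i \<in> ancestors T (Inl j)}"

definition inversions :: "nat \<Rightarrow> (nat + nat \<Rightarrow> (nat + nat) option) \<Rightarrow> (nat \<times> nat) set" where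
  "inversions q T = {(i, j). i < q \<and> j < q \<and> i \<noteq> j \<and> Inr (max i j) \<notin> ancestors T (Inr (min i j))}"

definition tree_potential ::
    "nat \<Rightarrow> nat \<Rightarrow> (nat \<Rightarrow> nat) \<Rightarrow> (nat + nat \<Rightarrow> (nat + nat) option) \<Rightarrow> nat" where
  "tree_potential p q m T = potential q m (below_count p T) (inversions q T)"

lemma inversions_subset: "inversions q T \<subseteq> {..<q} \<times> {..<q}"
  unfolding inversions_def by auto

locale Kpq_rotation = rotation Kpq_adj "Kpq_verts p q" f r u v for p q f r u v
begin

lemma below_count_rotate_other: "Inr i \<noteq> u \<Longrightarrow> Inr i \<noteq> v \<Longrightarrow> below_count p g i = below_count p f i"
  unfolding below_count_def using ancestors_rotate_other by simp

lemma inversions_rotate_other: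
  assumes "Inr (max i j) \<noteq> u" "Inr (max i j) \<noteq> v"
  shows "(i, j) \<in> inversions q g \<longleftrightarrow> (i, j) \<in> inversions q f"
  unfolding inversions_def using ancestors_rotate_other[OF assms] by simp

lemma tree_potential_rotate_same_side:
  assumes "isl u = isl v"
  shows "absdiff (tree_potential p q m f) (tree_potential p q m g) \<le> 2"
proof -
  have "Kpq_adj u z \<longleftrightarrow> Kpq_adj v z" for z using assms by (simp add: Kpq_adj_def)
  note anc = ancestors_rotate_twins[OF this]
  have "Inr i \<in> ancestors g (Inl j) \<longleftrightarrow> Inr i \<in> ancestors f (Inl j)" for i j
    using anc[of "Inr i" "Inl j"] assms by auto
  then have "\<forall>i<q. below_count p f i = below_count p g i" unfolding below_count_def by simp
  moreover
  let ?P = "{(projr u, projr v), (projr v, projr u)}"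
  have "Inr (max i j) \<in> ancestors g (Inr (min i j)) \<longleftrightarrow> Inr (max i j) \<in> ancestors f (Inr (min i j))"
    if "(i, j) \<notin> ?P" for i j
    using anc[of "Inr (max i j)" "Inr (min i j)"] that
    by (auto simp: max_def min_def split: if_splits)
  then have "inversions q f - ?P = inversions q g - ?P" unfolding inversions_def by auto
  ultimately show ?thesis
    unfolding tree_potential_def by (intro potential_pair_change) (auto simp: inversions_subset)
qed

context
  fixes b a assumes u: "u = Inr b" and v: "v = Inl a"
begin

lemma below_count_rotate_Inl_up: "absdiff (below_count p f b) (below_count p g b) \<le> 1"
proof -
  let ?S = "\<lambda>T. {j. j < p \<and> Inr b \<in> ancestors T (Inl j)}"
  have "Inl j \<notin> detached" for j
    using detached_no_neighbour[OF _ subtree_self, of "Inl j"] u by auto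
  then have "?S g = ?S f - {a}" using u_in_ancestors_rotate u v by auto
  moreover have "a \<in> ?S f"
    using parent_in_V(1)[OF child_v] ancestors_unfold[of f v] child_v u v
    by (auto simp: Kpq_verts_iff)
  moreover have "finite (?S f)" by simp
  ultimately have "card (?S g) = card (?S f) - 1" "card (?S f) \<ge> 1"
    by (auto simp: Suc_le_eq card_gt_0_iff)
  then show ?thesis unfolding below_count_def absdiff_def by simp
qed

lemma below_count_rotate_u_zero: "detached \<noteq> {} \<Longrightarrow> below_count p g b = 0"
proof -
  assume "detached \<noteq> {}"
  then obtain y where y: "y \<in> detached" by blast
  then have "\<not> isl y" using detached_no_neighbour[OF y subtree_self] u by (auto simp: Kpq_adj_def)
  have "Inl j = v" if "Inr b \<in> ancestors f (Inl j)" for j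
    using adjacent_to_detached[OF y] that \<open>\<not> isl y\<close> u ancestors_iff by (auto simp: Kpq_adj_def)
  then show ?thesis
    unfolding below_count_def using u_in_ancestors_rotate[of "Inl _"] u v by auto
qed

lemma below_count_rotate_detached: "Inr i \<in> detached \<Longrightarrow> below_count p g i = 0"
proof -
  assume i: "Inr i \<in> detached"
  then have "Inr i \<noteq> u" "Inr i \<noteq> v" using u_notin_detached v by auto
  moreover have "Inr i \<notin> ancestors f (Inl j)" for j
    using detached_no_neighbour[OF i, of "Inl j"] u ancestors_iff by auto
  ultimately show ?thesis unfolding below_count_def using ancestors_rotate_other by simp
qed

lemma tree_potential_rotate_Inl_up: "absdiff (tree_potential p q m f) (tree_potential p q m g) \<le> 2"
proof -
  have b: "b < q" using parent_in_V(2)[OF child_v] u by (simp add: Kpq_verts_iff)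
  define Y where "Y = (if detached = {} then {} else insert b {i. i < q \<and> Inr i \<in> detached})"
  have "(i, j) \<in> inversions q f \<longleftrightarrow> (i, j) \<in> inversions q g" if "\<not> (i \<in> Y \<and> j \<in> Y)" for i j
  proof (cases "Inr (max i j) = u")
    case False
    then show ?thesis using inversions_rotate_other[of i j] v by simp
  next
    case True
    then have "Inr (min i j) \<notin> detached" if "i < q" "j < q"
      using \<open>\<not> (i \<in> Y \<and> j \<in> Y)\<close> that u unfolding Y_def
      by (auto simp: max_def min_def split: if_splits)
    then show ?thesis using True u_in_ancestors_rotate[of "Inr (min i j)"] v
      unfolding inversions_def by auto
  qed
  then have "inversions q f - Y \<times> Y = inversions q g - Y \<times> Y" by fastforce
  moreover have "\<forall>i\<in>Y. below_count p g i = 0"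
    unfolding Y_def using below_count_rotate_u_zero below_count_rotate_detached by auto
  moreover have "\<forall>i<q. i \<noteq> b \<longrightarrow> below_count p f i = below_count p g i"
    using below_count_rotate_other u v by simp
  ultimately show ?thesis unfolding tree_potential_def using b below_count_rotate_Inl_up
    by (intro potential_reset) (auto simp: Y_def inversions_subset)
qed

end

context
  fixes a b assumes u: "u = Inl a" and v: "v = Inr b"
begin

lemma below_count_rotate_Inr_up: "absdiff (below_count p f b) (below_count p g b) \<le> 1"
proof -
  let ?S = "\<lambda>T. {j. j < p \<and> Inr b \<in> ancestors T (Inl j)}"
  have "Inl j = u" if "Inl j \<in> subtree f u" "Inl j \<notin> subtree f v" for j
    using adjacent_to_v_in_subtree_v[OF that(1)] that(2) v by auto
  then have "?S g = ?S f \<union> {a}"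
    using v_in_ancestors_rotate parent_in_V(2)[OF child_v] u v u_notin_subtree_v
    by (auto simp: Kpq_verts_iff)
  moreover have "a \<notin> ?S f" using u_notin_subtree_v ancestors_iff u v by simp
  ultimately have "card (?S g) = Suc (card (?S f))" by simp
  then show ?thesis unfolding below_count_def absdiff_def by simp
qed

lemma below_count_Inr_up_zero:
  assumes i: "i < q" "Inr i \<in> subtree f u" "Inr i \<notin> subtree f v"
  shows "below_count p f b = 0" "below_count p f i = 0"
proof -
  obtain c where c: "f c = Some u" "c \<noteq> v" "Inr i \<in> subtree f c"
    using outside_v_in_sibling[OF i(2,3)] u by auto
  have "Inr b \<notin> ancestors f (Inl j)" for j
  proof
    assume "Inr b \<in> ancestors f (Inl j)"
    then have "Inl j \<in> subtree f v" using ancestors_iff v by simp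
    then have "\<not> Kpq_adj (Inl j) (Inr i)"
      by (rule siblings_no_edge[OF child_v c(1) c(2)[symmetric] _ c(3)])
    then show False by simp
  qed
  then show "below_count p f b = 0" unfolding below_count_def by simp
  have "Inr i \<notin> ancestors f (Inl j)" for j
  proof
    assume "Inr i \<in> ancestors f (Inl j)"
    then have "Inl j \<in> subtree f c" using ancestors_iff subtree_trans[OF _ c(3)] by simp
    then have "\<not> Kpq_adj (Inl j) v" by (rule siblings_no_edge[OF c(1) child_v c(2) _ subtree_self])
    then show False using v by simp
  qed
  then show "below_count p f i = 0" unfolding below_count_def by simp
qed

lemma tree_potential_rotate_Inr_up: "absdiff (tree_potential p q m f) (tree_potential p q m g) \<le> 2"
proof -
  have b: "b < q" using parent_in_V(1)[OF child_v] v by (simp add: Kpq_verts_iff)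
  define G where "G = {i. i < q \<and> Inr i \<in> subtree f u \<and> Inr i \<notin> subtree f v}"
  define Y where "Y = (if G = {} then {} else insert b G)"
  have "(i, j) \<in> inversions q g \<longleftrightarrow> (i, j) \<in> inversions q f" if "\<not> (i \<in> Y \<and> j \<in> Y)" for i j
  proof (cases "Inr (max i j) = v")
    case False
    then show ?thesis using inversions_rotate_other[of i j] u by simp
  next
    case True
    then have "\<not> (Inr (min i j) \<in> subtree f u \<and> Inr (min i j) \<notin> subtree f v)" if "i < q" "j < q"
      using \<open>\<not> (i \<in> Y \<and> j \<in> Y)\<close> that v unfolding Y_def G_def
      by (auto simp: max_def min_def split: if_splits)
    then show ?thesis using True v_in_ancestors_rotate[of "Inr (min i j)"]
      unfolding inversions_def by auto
  qed
  then have "inversions q g - Y \<times> Y = inversions q f - Y \<times> Y" by fastforce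
  moreover have "\<forall>i\<in>Y. below_count p f i = 0"
    unfolding Y_def G_def using below_count_Inr_up_zero by auto
  moreover have "\<forall>i<q. i \<noteq> b \<longrightarrow> below_count p g i = below_count p f i"
    using below_count_rotate_other u v by simp
  moreover have "absdiff (below_count p g b) (below_count p f b) \<le> 1"
    using below_count_rotate_Inr_up by (simp add: absdiff_def)
  ultimately have "absdiff (tree_potential p q m g) (tree_potential p q m f) \<le> 2"
    unfolding tree_potential_def using b
    by (intro potential_reset) (auto simp: Y_def G_def inversions_subset)
  then show ?thesis by (simp add: absdiff_def)
qed

end

lemma tree_potential_rotate: "absdiff (tree_potential p q m f) (tree_potential p q m g) \<le> 2"
  using tree_potential_rotate_same_side tree_potential_rotate_Inl_up tree_potential_rotate_Inr_up
  by (cases u; cases v) auto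

end

lemma tree_potential_rotation_step:
  assumes "0 < p" "0 < q"
    and f: "search_tree Kpq_adj (Kpq_verts p q) f" and g: "search_tree Kpq_adj (Kpq_verts p q) g"
    and "rotation_step Kpq_adj f g"
  shows "absdiff (tree_potential p q m f) (tree_potential p q m g) \<le> 2"
proof -
  obtain r where r: "st Kpq_adj f (Kpq_verts p q) r" "f r = None"
    and outside: "\<forall>x. x \<notin> Kpq_verts p q \<longrightarrow> f x = None"
    using f unfolding search_tree_def by blast
  obtain u v where uv: "f v = Some u" "g = rotate Kpq_adj f u v"
    using assms(5) unfolding rotation_step_def by blast
  interpret Kpq_rotation p q f r u v
    by unfold_locales
      (use symp_Kpq_adj r outside connected_in_Kpq_verts[OF assms(1,2)] uv g in auto)
  show ?thesis using tree_potential_rotate uv(2) by simp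
qed

lemma tree_potential_relpow:
  assumes "0 < p" "0 < q" and "(f, g) \<in> (rot_edges Kpq_adj (Kpq_verts p q)) ^^ n"
  shows "tree_potential p q m f \<le> tree_potential p q m g + 2 * n"
  using assms(3)
proof (induct n arbitrary: g)
  case 0
  then show ?case by simp
next
  case (Suc n)
  obtain h where h: "(f, h) \<in> (rot_edges Kpq_adj (Kpq_verts p q)) ^^ n"
    "(h, g) \<in> rot_edges Kpq_adj (Kpq_verts p q)"
    using relpow_Suc_E[OF Suc(2)] by blast
  then have "search_tree Kpq_adj (Kpq_verts p q) h" "search_tree Kpq_adj (Kpq_verts p q) g"
    "rotation_step Kpq_adj h g \<or> rotation_step Kpq_adj g h"
    unfolding rot_edges_def by auto
  then have "absdiff (tree_potential p q m h) (tree_potential p q m g) \<le> 2"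
    using tree_potential_rotation_step[OF assms(1,2)] absdiff_commute by metis
  then show ?case using Suc(1)[OF h(1)] by (auto simp: absdiff_le_iff)
qed

lemma rot_dist_ge_potential_gap:
  assumes "0 < p" "0 < q" and gap: "2 * k + tree_potential p q m g \<le> tree_potential p q m f"
  shows "enat k \<le> rot_dist Kpq_adj (Kpq_verts p q) f g"
  unfolding rot_dist_def
proof (rule INF_greatest)
  fix n assume "n \<in> {n. (f, g) \<in> (rot_edges Kpq_adj (Kpq_verts p q)) ^^ n}"
  then have "tree_potential p q m f \<le> tree_potential p q m g + 2 * n"
    using tree_potential_relpow[OF assms(1,2)] by simp
  then show "enat k \<le> enat n" using gap by simp
qed

section \<open>Chain trees\<close>

fun chain_tree :: "'a list \<Rightarrow> 'a set \<Rightarrow> 'a \<Rightarrow> 'a option" where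
  "chain_tree [] L = (\<lambda>_. None)"
| "chain_tree [x] L = (\<lambda>y. if y \<in> L then Some x else None)"
| "chain_tree (x # y # zs) L = (chain_tree (y # zs) L)(y := Some x)"

lemma chain_tree_SomeD: "chain_tree cs L w = Some a \<Longrightarrow> w \<in> set (tl cs) \<union> L \<and> a \<in> set cs"
  by (induct cs L rule: chain_tree.induct) (auto split: if_splits)

lemma chain_tree_Cons_None:
  assumes "x \<notin> set cs" "x \<notin> L"
  shows "chain_tree cs L x = None"
  using chain_tree_SomeD[of cs L x] assms by (cases cs; cases "chain_tree cs L x") auto

lemma parent_rel_chain_tree_Cons:
  assumes "y \<notin> set zs" "y \<notin> L"
  shows "parent_rel (chain_tree (x # y # zs) L) =
    insert (y, x) (parent_rel (chain_tree (y # zs) L))"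
  using chain_tree_SomeD[of "y # zs" L y] assms unfolding parent_rel_def
  by (auto split: if_splits)

lemma chain_tree_reaches_hd:
  assumes "distinct cs" "set cs \<inter> L = {}" "cs \<noteq> []"
  shows "(w, hd cs) \<in> (parent_rel (chain_tree cs L))\<^sup>* \<longleftrightarrow> w \<in> set cs \<union> L"
  using assms
proof (induct cs L arbitrary: w rule: chain_tree.induct)
  case (1 L)
  then show ?case by simp
next
  case (2 x L)
  have "(w, x) \<in> (parent_rel (chain_tree [x] L))\<^sup>* \<longleftrightarrow> w = x \<or> w \<in> L"
  proof
    assume "(w, x) \<in> (parent_rel (chain_tree [x] L))\<^sup>*"
    then show "w = x \<or> w \<in> L" by (cases rule: converse_rtranclE) (auto split: if_splits)
  qed auto
  then show ?case by simp
next
  case (3 x y zs L)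
  let ?R = "parent_rel (chain_tree (y # zs) L)"
  have IH: "(w, y) \<in> ?R\<^sup>* \<longleftrightarrow> w \<in> set (y # zs) \<union> L" for w
    using 3 by auto
  have "(w, x) \<notin> ?R\<^sup>+" for w
  proof
    assume "(w, x) \<in> ?R\<^sup>+"
    then obtain b where "(b, x) \<in> ?R" by (meson tranclD2)
    then show False using chain_tree_SomeD[of "y # zs" L b x] 3(2) by auto
  qed
  then have "(w, x) \<in> ?R\<^sup>* \<longleftrightarrow> w = x" for w by (auto simp: rtrancl_eq_or_trancl)
  then have "(w, x) \<in> (insert (y, x) ?R)\<^sup>* \<longleftrightarrow> w \<in> set (x # y # zs) \<union> L"
    using IH by (auto simp: rtrancl_insert)
  moreover have "parent_rel (chain_tree (x # y # zs) L) = insert (y, x) ?R"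
    by (rule parent_rel_chain_tree_Cons) (use 3(2,3) in auto)
  ultimately show ?case by (simp only: list.sel(1))
qed

lemma Cons_eq_append_Cons_iff:
  "(\<exists>us vs. x # ys = us @ a # vs \<and> P vs) \<longleftrightarrow> (a = x \<and> P ys) \<or> (\<exists>us vs. ys = us @ a # vs \<and> P vs)"
proof
  assume "\<exists>us vs. x # ys = us @ a # vs \<and> P vs"
  then obtain us vs where "x # ys = us @ a # vs" "P vs" by blast
  then show "(a = x \<and> P ys) \<or> (\<exists>us vs. ys = us @ a # vs \<and> P vs)"
    by (cases us) auto
next
  assume "(a = x \<and> P ys) \<or> (\<exists>us vs. ys = us @ a # vs \<and> P vs)"
  then show "\<exists>us vs. x # ys = us @ a # vs \<and> P vs"
    by (metis append_Cons append_Nil)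
qed

lemma ancestors_chain_tree:
  assumes "distinct cs" "set cs \<inter> L = {}" "cs \<noteq> []"
  shows "a \<in> ancestors (chain_tree cs L) w \<longleftrightarrow> (\<exists>us vs. cs = us @ a # vs \<and> w \<in> set vs \<union> L)"
  using assms
proof (induct cs L arbitrary: w rule: chain_tree.induct)
  case (1 L)
  then show ?case by simp
next
  case (2 x L)
  have "ancestors (chain_tree [x] L) x = {}"
    using ancestors_unfold[of "chain_tree [x] L" x] 2 by auto
  then have "ancestors (chain_tree [x] L) w = (if w \<in> L then {x} else {})"
    using ancestors_unfold[of "chain_tree [x] L" w] by simp
  then show ?case by (auto simp: Cons_eq_append_conv)
next
  case (3 x y zs L)
  let ?R = "parent_rel (chain_tree (y # zs) L)"
  have reach_y: "(w, y) \<in> ?R\<^sup>* \<longleftrightarrow> w \<in> set (y # zs) \<union> L"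
    using chain_tree_reaches_hd[of "y # zs" L w] 3(2,3) by auto
  have "(x, b) \<in> ?R\<^sup>* \<longleftrightarrow> b = x" for b
    using chain_tree_Cons_None[of x "y # zs" L] 3(2,3) by (simp add: rtrancl_parent_rel_None)
  moreover have "parent_rel (chain_tree (x # y # zs) L) = insert (y, x) ?R"
    by (rule parent_rel_chain_tree_Cons) (use 3(2,3) in auto)
  ultimately have "a \<in> ancestors (chain_tree (x # y # zs) L) w \<longleftrightarrow>
      (w, a) \<in> ?R\<^sup>+ \<or> ((w, y) \<in> ?R\<^sup>* \<and> a = x)"
    unfolding ancestors_def by (simp add: trancl_insert)
  also have "\<dots> \<longleftrightarrow> a \<in> ancestors (chain_tree (y # zs) L) w \<or> (a = x \<and> w \<in> set (y # zs) \<union> L)"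
    using reach_y by (auto simp: ancestors_def)
  also have "\<dots> \<longleftrightarrow> (\<exists>us vs. x # y # zs = us @ a # vs \<and> w \<in> set vs \<union> L)"
    using 3(1)[of w] 3(2,3) Cons_eq_append_Cons_iff[of x "y # zs" a "\<lambda>vs. w \<in> set vs \<union> L"]
    by auto
  finally show ?case .
qed

lemma sorted_wrt_split_iff:
  assumes "sorted_wrt (\<lambda>a b. \<rho> a < (\<rho> b :: nat)) cs" "a \<in> set cs" "w \<in> set cs"
  shows "(\<exists>us vs. cs = us @ a # vs \<and> w \<in> set vs) \<longleftrightarrow> \<rho> a < \<rho> w"
proof
  assume "\<exists>us vs. cs = us @ a # vs \<and> w \<in> set vs"
  then obtain us vs where "cs = us @ a # vs" "w \<in> set vs" by blast
  then show "\<rho> a < \<rho> w" using assms(1) by (simp add: sorted_wrt_append)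
next
  assume lt: "\<rho> a < \<rho> w"
  obtain us vs where cs: "cs = us @ a # vs" using split_list[OF assms(2)] by blast
  have "w \<notin> set us" using assms(1) lt cs by (auto simp: sorted_wrt_append)
  then have "w \<in> set vs" using assms(3) lt cs by auto
  then show "\<exists>us vs. cs = us @ a # vs \<and> w \<in> set vs" using cs by blast
qed

lemma ancestors_chain_tree_sorted:
  assumes "distinct cs" "set cs \<inter> L = {}" "cs \<noteq> []"
    and sorted: "sorted_wrt (\<lambda>a b. \<rho> a < (\<rho> b :: nat)) cs"
  shows "w \<in> L \<Longrightarrow> a \<in> ancestors (chain_tree cs L) w \<longleftrightarrow> a \<in> set cs"
    and "w \<in> set cs \<Longrightarrow> a \<in> ancestors (chain_tree cs L) w \<longleftrightarrow> a \<in> set cs \<and> \<rho> a < \<rho> w"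
proof -
  assume "w \<in> L"
  then show "a \<in> ancestors (chain_tree cs L) w \<longleftrightarrow> a \<in> set cs"
    using ancestors_chain_tree[OF assms(1-3)] split_list[of a cs] by auto
next
  assume w: "w \<in> set cs"
  then have "a \<in> ancestors (chain_tree cs L) w \<longleftrightarrow> (\<exists>us vs. cs = us @ a # vs \<and> w \<in> set vs)"
    using ancestors_chain_tree[OF assms(1-3)] assms(2) by auto
  also have "\<dots> \<longleftrightarrow> a \<in> set cs \<and> \<rho> a < \<rho> w"
  proof (cases "a \<in> set cs")
    case True
    then show ?thesis using sorted_wrt_split_iff[OF sorted True w] by simp
  qed auto
  finally show "a \<in> ancestors (chain_tree cs L) w \<longleftrightarrow> a \<in> set cs \<and> \<rho> a < \<rho> w" .
qed

lemma st_singleton: "st E h {l} l"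
  by (rule st.intros) (auto simp: components_in_empty)

lemma st_chain_tree:
  assumes "distinct cs" "set cs \<inter> L = {}" "cs \<noteq> []"
    and "\<forall>k. 0 < k \<longrightarrow> k < length cs \<longrightarrow> connected_in E (set (drop k cs) \<union> L)"
    and "\<forall>a\<in>L. \<forall>b\<in>L. \<not> E a b"
  shows "st E (chain_tree cs L) (set cs \<union> L) (hd cs)"
  using assms
proof (induct cs L rule: chain_tree.induct)
  case (1 L)
  then show ?case by simp
next
  case (2 x L)
  have S: "set [x] \<union> L - {hd [x]} = L" using 2 by auto
  show ?case
  proof (rule st.intros)
    show "hd [x] \<in> set [x] \<union> L" by simp
    show "\<forall>C\<in>components_in E (set [x] \<union> L - {hd [x]}).
        \<exists>c\<in>C. chain_tree [x] L c = Some (hd [x]) \<and> st E (chain_tree [x] L) C c"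
      unfolding S components_in_independent[OF 2(5)] using st_singleton by auto
  qed
next
  case (3 x y zs L)
  let ?h = "chain_tree (x # y # zs) L"
  have S: "set (x # y # zs) \<union> L - {x} = set (y # zs) \<union> L" using 3(2,3) by auto
  have conn: "connected_in E (set (y # zs) \<union> L)" using 3(5)[rule_format, of 1] by simp
  have "\<forall>k. 0 < k \<longrightarrow> k < length (y # zs) \<longrightarrow> connected_in E (set (drop k (y # zs)) \<union> L)"
    using 3(5)[rule_format, of "Suc _"] by simp
  then have "st E (chain_tree (y # zs) L) (set (y # zs) \<union> L) y"
    using 3(1) 3(2,3,6) by simp
  then have "st E ?h (set (y # zs) \<union> L) y" by (rule st_cong) simp
  show ?case
  proof (rule st.intros)
    show "hd (x # y # zs) \<in> set (x # y # zs) \<union> L" by simp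
    show "\<forall>C\<in>components_in E (set (x # y # zs) \<union> L - {hd (x # y # zs)}).
        \<exists>c\<in>C. ?h c = Some (hd (x # y # zs)) \<and> st E ?h C c"
      unfolding list.sel(1) S components_in_connected[OF conn] using \<open>st E ?h _ y\<close> by simp
  qed
qed

lemma search_tree_chain_tree:
  assumes "distinct cs" "set cs \<inter> L = {}" "cs \<noteq> []"
    and "\<forall>k. 0 < k \<longrightarrow> k < length cs \<longrightarrow> connected_in E (set (drop k cs) \<union> L)"
    and "\<forall>a\<in>L. \<forall>b\<in>L. \<not> E a b"
    and V: "V = set cs \<union> L"
  shows "search_tree E V (chain_tree cs L)"
  unfolding search_tree_def
proof (intro conjI exI allI impI)
  show "st E (chain_tree cs L) V (hd cs)" using st_chain_tree[OF assms(1-5)] V by simp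
  show "chain_tree cs L (hd cs) = None"
    using chain_tree_SomeD[of cs L "hd cs"] assms(1-3)
    by (cases cs; cases "chain_tree cs L (hd cs)") auto
  show "chain_tree cs L x = None" if "x \<notin> V" for x
    using chain_tree_Cons_None[of x cs L] that V by simp
qed

section \<open>The target profile\<close>

text \<open>\<open>\<phi> x = 4 c x + 4 (x - r) - x (x - 1)\<close> is concave, so it is nonnegative between two points
  where it is nonnegative.\<close>

lemma quadratic_le_linear_between:
  fixes c r k q :: int
  assumes "r < k" "k \<le> q" "r * (r - 1) \<le> 4 * c * r" "q * (q - 1) \<le> 4 * (c * q + (q - r))"
  shows "k * (k - 1) \<le> 4 * (c * k + (k - r))"
proof -
  define \<phi> where "\<phi> x = 4 * c * x + 4 * (x - r) - x * (x - 1)" for x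
  have "(q - r) * \<phi> k = (q - k) * \<phi> r + (k - r) * \<phi> q + (q - r) * (k - r) * (q - k)"
    unfolding \<phi>_def by (simp add: algebra_simps)
  moreover have "0 \<le> \<phi> r" "0 \<le> \<phi> q" using assms(3,4) unfolding \<phi>_def
    by (simp_all add: algebra_simps)
  ultimately have "0 \<le> (q - r) * \<phi> k" using assms(1,2) by simp
  then have "0 \<le> \<phi> k" using assms(1,2) by (simp add: zero_le_mult_iff)
  then show ?thesis unfolding \<phi>_def by (simp add: algebra_simps)
qed

lemma pairs_le_linear_bound:
  fixes k q r c :: nat
  assumes "k \<le> q" "1 \<le> r" "r \<le> q" "r \<le> 4 * c + 1"
    and q_bound: "q * (q - 1) \<le> 4 * (c * q + (q - r))"
  shows "k * (k - 1) \<le> 4 * (c * k + (k - r))"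
proof (cases "k \<le> r")
  case True
  then have "k * (k - 1) \<le> k * (4 * c)" using assms(4) by (intro mult_left_mono) auto
  then show ?thesis by (simp add: algebra_simps)
next
  case False
  have "int r * int r \<le> int r * (4 * int c + 1)" using assms(4) by (intro mult_left_mono) auto
  then have r_bound: "int r * (int r - 1) \<le> 4 * int c * int r" by (simp add: algebra_simps)
  have "int (q * (q - 1)) \<le> int (4 * (c * q + (q - r)))" using q_bound by (rule of_nat_mono)
  then have q_bound': "int q * (int q - 1) \<le> 4 * (int c * int q + (int q - int r))"
    using assms(2,3) by (simp add: of_nat_diff)
  have "int k * (int k - 1) \<le> 4 * (int c * int k + (int k - int r))"
    by (rule quadratic_le_linear_between[OF _ _ r_bound q_bound']) (use False assms(1) in auto)
  moreover have "int (k * (k - 1)) = int k * (int k - 1)" "int (4 * (c * k + (k - r))) =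
      4 * (int c * int k + (int k - int r))"
    using False assms(2) by (simp_all add: of_nat_diff)
  ultimately show ?thesis by linarith
qed

text \<open>The target profile spreads \<open>\<lceil>(q choose 2) / 2\<rceil>\<close> as evenly as possible over the \<open>q\<close>
  vertices of the second part: the first \<open>target_cut q\<close> of them get \<open>target_base q\<close>, the
  others one more.\<close>

definition target_total :: "nat \<Rightarrow> nat" where
  "target_total q = (q choose 2) - (q choose 2) div 2"

definition target_base :: "nat \<Rightarrow> nat" where
  "target_base q = target_total q div q"

definition target_cut :: "nat \<Rightarrow> nat" where
  "target_cut q = q - target_total q mod q"

definition target :: "nat \<Rightarrow> nat \<Rightarrow> nat" where
  "target q i = (if i < target_cut q then target_base q else Suc (target_base q))"

lemma choose_two_double: "2 * (q choose 2) = q * (q - 1)"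
proof -
  have "even (q * (q - 1))" by (cases "even q") auto
  then show ?thesis unfolding choose_two by simp
qed

lemma target_cut_pos: "0 < q \<Longrightarrow> 1 \<le> target_cut q"
  unfolding target_cut_def by (simp add: Suc_le_eq)

lemma target_cut_le: "target_cut q \<le> q"
  unfolding target_cut_def by simp

lemma target_total_eq: "0 < q \<Longrightarrow> target_total q = target_base q * q + (q - target_cut q)"
  unfolding target_base_def target_cut_def by simp

lemma choose_two_le_target_total: "q * (q - 1) \<le> 4 * target_total q"
  using choose_two_double[of q] unfolding target_total_def by linarith

lemma target_base_less:
  assumes "0 < p" "0 < q" "q \<le> 4 * p"
  shows "target_base q < p"
proof -
  have "4 * target_total q \<le> q * (q - 1) + 2"
    using choose_two_double[of q] unfolding target_total_def by linarith
  also have "\<dots> < 4 * (p * q)"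
  proof (cases "q \<le> 2")
    case True
    then have "q = 1 \<or> q = 2" using assms(2) by auto
    then show ?thesis using assms(1) by auto
  next
    case False
    have "q * (q - 1) \<le> q * (4 * p - 1)" using assms(3) by (intro mult_left_mono) auto
    moreover have "q * (4 * p - 1) = 4 * (p * q) - q"
      by (simp add: algebra_simps diff_mult_distrib2)
    moreover have "q \<le> 4 * (p * q)" using assms(1) by simp
    ultimately show ?thesis using False by linarith
  qed
  finally show ?thesis unfolding target_base_def using assms(2)
    by (simp add: div_less_iff_less_mult mult.commute)
qed

lemma target_cut_le_base: "0 < q \<Longrightarrow> target_cut q \<le> 4 * target_base q + 1"
proof (cases "q \<le> 3")
  case True
  assume "0 < q"
  with True have "q = 1 \<or> q = 2 \<or> q = 3" by auto
  then show ?thesis by (auto simp: target_cut_def target_base_def target_total_def choose_two)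
next
  case False
  assume q: "0 < q"
  let ?h = "q - target_cut q"
  have "q * (q - 1) \<le> 4 * (target_base q * q) + 4 * ?h"
    using choose_two_le_target_total[of q] target_total_eq[OF q] by simp
  also have "\<dots> \<le> q * (4 * target_base q) + q * ?h" using False by simp
  finally have "q * (q - 1) \<le> q * (4 * target_base q + ?h)" by (simp add: algebra_simps)
  then have "q - 1 \<le> 4 * target_base q + ?h" using q by simp
  then show ?thesis using target_cut_pos[OF q] target_cut_le[of q] by linarith
qed

lemma sum_target: "0 < q \<Longrightarrow> (\<Sum>i<q. target q i) = target_total q"
proof -
  assume q: "0 < q"
  have "(\<Sum>i<q. target q i) = (\<Sum>i<q. target_base q + (if target_cut q \<le> i then 1 else 0))"
    unfolding target_def by (intro sum.cong) auto
  also have "\<dots> = target_base q * q + card {i \<in> {..<q}. target_cut q \<le> i}"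
    by (simp add: sum.distrib sum.If_cases Int_def)
  also have "{i \<in> {..<q}. target_cut q \<le> i} = {target_cut q..<q}" by auto
  finally show ?thesis using target_total_eq[OF q] by simp
qed

lemma sum_target_ge:
  assumes "finite Z"
  shows "target_base q * card Z + (card Z - target_cut q) \<le> (\<Sum>i\<in>Z. target q i)"
proof -
  have "(\<Sum>i\<in>Z. target q i) = (\<Sum>i\<in>Z. target_base q + (if target_cut q \<le> i then 1 else 0))"
    unfolding target_def by (intro sum.cong) auto
  also have "\<dots> = target_base q * card Z + card {i \<in> Z. target_cut q \<le> i}"
    using assms by (simp add: sum.distrib sum.If_cases Int_def)
  finally have sum: "(\<Sum>i\<in>Z. target q i) = target_base q * card Z + card {i \<in> Z. target_cut q \<le> i}" .
  have "Z \<subseteq> {i \<in> Z. target_cut q \<le> i} \<union> {..<target_cut q}" by auto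
  then have "card Z \<le> card {i \<in> Z. target_cut q \<le> i} + target_cut q"
    using card_mono[OF _ \<open>Z \<subseteq> _\<close>] card_Un_le[of "{i \<in> Z. target_cut q \<le> i}" "{..<target_cut q}"]
    using assms by simp
  then show ?thesis using sum by linarith
qed

lemma pairs_le_target_sum:
  assumes "0 < q" "Z \<subseteq> {..<q}"
  shows "card Z * (card Z - 1) \<le> 4 * (\<Sum>i\<in>Z. target q i)"
proof -
  have "finite Z" using assms(2) finite_subset by blast
  have "card Z \<le> q" using card_mono[OF _ assms(2)] by simp
  moreover have "q * (q - 1) \<le> 4 * (target_base q * q + (q - target_cut q))"
    using choose_two_le_target_total[of q] target_total_eq[OF assms(1)] by simp
  ultimately have "card Z * (card Z - 1) \<le> 4 * (target_base q * card Z + (card Z - target_cut q))"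
    by (rule pairs_le_linear_bound[OF _ target_cut_pos[OF assms(1)] target_cut_le
          target_cut_le_base[OF assms(1)]])
  also have "\<dots> \<le> 4 * (\<Sum>i\<in>Z. target q i)" by (rule mult_le_mono2[OF sum_target_ge[OF \<open>finite Z\<close>]])
  finally show ?thesis .
qed

section \<open>Two extremal search trees\<close>

lemma sorted_wrt_upt_rel: "(\<And>x y. a \<le> x \<Longrightarrow> x < y \<Longrightarrow> y < b \<Longrightarrow> P x y) \<Longrightarrow> sorted_wrt P [a..<b]"
  by (rule sorted_wrt_mono_rel[OF _ sorted_wrt_upt]) auto

definition off_diagonal :: "'a set \<Rightarrow> ('a \<times> 'a) set" where
  "off_diagonal A = {(i, j). i \<in> A \<and> j \<in> A \<and> i \<noteq> j}"

lemma card_off_diagonal: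
  assumes "finite A"
  shows "card (off_diagonal A) = card A * (card A - 1)"
proof -
  have "off_diagonal A = A \<times> A - (\<lambda>x. (x, x)) ` A" unfolding off_diagonal_def by auto
  moreover have "card ((\<lambda>x. (x, x)) ` A) = card A" by (rule card_image) (simp add: inj_on_def)
  ultimately show ?thesis
    using card_Diff_subset[of "(\<lambda>x. (x, x)) ` A" "A \<times> A"] assms
    by (auto simp: card_cartesian_product diff_mult_distrib2)
qed

lemma card_off_diagonal_minus_square:
  assumes "Z \<subseteq> {..<q}"
  shows "card (off_diagonal {..<q} - Z \<times> Z) + card Z * (card Z - 1) = q * (q - 1)"
proof -
  have "finite Z" using assms finite_subset by blast
  have "off_diagonal {..<q} - Z \<times> Z = off_diagonal {..<q} - off_diagonal Z"
    unfolding off_diagonal_def by auto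
  moreover have sub: "off_diagonal Z \<subseteq> off_diagonal {..<q}"
    using assms unfolding off_diagonal_def by auto
  moreover have "finite (off_diagonal {..<q})"
    by (rule finite_subset[of _ "{..<q} \<times> {..<q}"]) (auto simp: off_diagonal_def)
  ultimately have "card (off_diagonal {..<q} - Z \<times> Z) + card (off_diagonal Z) =
      card (off_diagonal {..<q})"
    by (simp add: card_Diff_subset[OF finite_subset[OF sub]] card_mono[OF _ sub])
  then show ?thesis using card_off_diagonal[OF \<open>finite Z\<close>] card_off_diagonal[of "{..<q}"] by simp
qed

definition Inr_chain_tree :: "nat \<Rightarrow> nat \<Rightarrow> nat + nat \<Rightarrow> (nat + nat) option" where
  "Inr_chain_tree p q = chain_tree (map Inr [0..<q]) (Inl ` {..<p})"

context
  fixes p q :: nat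
  assumes p: "0 < p" and q: "0 < q"
begin

lemma search_tree_Inr_chain_tree: "search_tree Kpq_adj (Kpq_verts p q) (Inr_chain_tree p q)"
  unfolding Inr_chain_tree_def
proof (rule search_tree_chain_tree)
  show "distinct (map Inr [0..<q] :: (nat + nat) list)" by (simp add: distinct_map)
  show "set (map Inr [0..<q]) \<inter> Inl ` {..<p} = {}" by auto
  show "map Inr [0..<q] \<noteq> []" using q by simp
  show "\<forall>k. 0 < k \<longrightarrow> k < length (map Inr [0..<q] :: (nat + nat) list) \<longrightarrow>
      connected_in Kpq_adj (set (drop k (map Inr [0..<q])) \<union> Inl ` {..<p})"
  proof (intro allI impI)
    fix k assume "0 < k" "k < length (map Inr [0..<q] :: (nat + nat) list)"
    then have "Inr k \<in> set (drop k (map Inr [0..<q])) \<union> Inl ` {..<p}" by (simp add: drop_map)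
    moreover have "Inl 0 \<in> set (drop k (map Inr [0..<q])) \<union> Inl ` {..<p}" using p by simp
    ultimately show "connected_in Kpq_adj (set (drop k (map Inr [0..<q])) \<union> Inl ` {..<p})"
      by (intro connected_in_Kpq)
  qed
  show "\<forall>a\<in>Inl ` {..<p}. \<forall>b\<in>Inl ` {..<p}. \<not> Kpq_adj a b" by auto
  show "Kpq_verts p q = set (map Inr [0..<q]) \<union> Inl ` {..<p}" unfolding Kpq_verts_def by auto
qed

lemma ancestors_Inr_chain_tree:
  shows "j < p \<Longrightarrow> i < q \<Longrightarrow> Inr i \<in> ancestors (Inr_chain_tree p q) (Inl j)"
    and "i < q \<Longrightarrow> j < q \<Longrightarrow> Inr j \<in> ancestors (Inr_chain_tree p q) (Inr i) \<longleftrightarrow> j < i"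
proof -
  have "sorted_wrt (\<lambda>a b. projr a < projr b) (map Inr [0..<q] :: (nat + nat) list)"
    by (simp add: sorted_wrt_map sorted_wrt_upt)
  note anc = ancestors_chain_tree_sorted[of "map Inr [0..<q]" "Inl ` {..<p}" projr,
      OF _ _ _ this, folded Inr_chain_tree_def]
  show "j < p \<Longrightarrow> i < q \<Longrightarrow> Inr i \<in> ancestors (Inr_chain_tree p q) (Inl j)"
    using anc(1)[of "Inl j" "Inr i"] q by (auto simp: distinct_map)
  show "i < q \<Longrightarrow> j < q \<Longrightarrow> Inr j \<in> ancestors (Inr_chain_tree p q) (Inr i) \<longleftrightarrow> j < i"
    using anc(2)[of "Inr i" "Inr j"] q by (auto simp: distinct_map)
qed

lemma below_count_Inr_chain_tree: "i < q \<Longrightarrow> below_count p (Inr_chain_tree p q) i = p"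
proof -
  assume "i < q"
  then have "{j. j < p \<and> Inr i \<in> ancestors (Inr_chain_tree p q) (Inl j)} = {..<p}"
    using ancestors_Inr_chain_tree(1) by auto
  then show ?thesis unfolding below_count_def by simp
qed

lemma inversions_Inr_chain_tree: "inversions q (Inr_chain_tree p q) = off_diagonal {..<q}"
  unfolding inversions_def off_diagonal_def using ancestors_Inr_chain_tree(2)
  by (auto simp: max_def min_def)

end

lemma sum_cost_constant:
  assumes "\<forall>i<q. N i = p" "\<forall>i. m i \<le> p" "Z \<subseteq> {..<q}"
  shows "(\<Sum>i<q. cost m N Z i) + (\<Sum>i<q. m i) = p * q + 2 * (\<Sum>i\<in>Z. m i)"
proof -
  have "(\<Sum>i<q. cost m N Z i) + (\<Sum>i<q. m i) = (\<Sum>i<q. p + (if i \<in> Z then 2 * m i else 0))"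
    unfolding sum.distrib[symmetric] using assms(1,2)
    by (intro sum.cong) (auto simp: cost_def absdiff_def)
  also have "\<dots> = p * q + (\<Sum>i\<in>{..<q} \<inter> Z. 2 * m i)"
    by (simp add: sum.distrib sum.inter_restrict)
  also have "{..<q} \<inter> Z = Z" using assms(3) by blast
  finally show ?thesis by (simp add: sum_distrib_left)
qed

lemma potential_at_Inr_chain_tree:
  assumes p: "0 < p" and q: "0 < q" "q \<le> 4 * p" and N: "\<forall>i<q. N i = p" and Z: "Z \<subseteq> {..<q}"
  shows "2 * (p * q + (q choose 2) div 2) \<le> potential_at q (target q) N (off_diagonal {..<q}) Z"
proof -
  define s where "s = (\<Sum>i\<in>Z. target q i)"
  define k2 where "k2 = card Z * (card Z - 1)"
  define q2 where "q2 = q * (q - 1)"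
  define h where "h = (q choose 2) div 2"
  have "\<forall>i. target q i \<le> p" using target_base_less[OF p q] unfolding target_def by auto
  then have "(\<Sum>i<q. cost (target q) N Z i) + target_total q = p * q + 2 * s"
    unfolding s_def using sum_cost_constant[OF N _ Z, of "target q"] sum_target[OF q(1)] by simp
  moreover have "card (off_diagonal {..<q} - Z \<times> Z) + k2 = q2"
    unfolding k2_def q2_def by (rule card_off_diagonal_minus_square[OF Z])
  moreover have "k2 \<le> 4 * s" unfolding k2_def s_def by (rule pairs_le_target_sum[OF q(1) Z])
  moreover have "2 * (q choose 2) = q2" unfolding q2_def by (rule choose_two_double)
  moreover have "target_total q + h = q choose 2" unfolding target_total_def h_def by simp
  ultimately show ?thesis unfolding potential_at_def h_def[symmetric] by presburger
qed

lemma tree_potential_Inr_chain_tree: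
  assumes "0 < p" "0 < q" "q \<le> 4 * p"
  shows "2 * (p * q + (q choose 2) div 2) \<le> tree_potential p q (target q) (Inr_chain_tree p q)"
  unfolding tree_potential_def inversions_Inr_chain_tree[OF assms(1,2)]
  using potential_at_Inr_chain_tree[OF assms] below_count_Inr_chain_tree[OF assms(1,2)]
  by (intro potential_ge) simp

text \<open>From the root: the vertices \<open>Inl j\<close> with \<open>j > c\<close>, then \<open>Inr (q - 1), \<dots>, Inr r\<close>, then
  \<open>Inl c\<close>, then \<open>Inr (r - 1), \<dots>, Inr 0\<close>, with the vertices \<open>Inl j\<close>, \<open>j < c\<close>, as leaves; so
  \<open>Inr i\<close> is above exactly \<open>target q i\<close> vertices of the first part, and larger indices of
  the second part are above smaller ones.\<close>

definition target_chain :: "nat \<Rightarrow> nat \<Rightarrow> (nat + nat) list" where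
  "target_chain p q = (let c = target_base q; r = target_cut q in
     map Inl [Suc c..<p] @ map Inr (rev [r..<q]) @ Inl c # map Inr (rev [1..<r]) @ [Inr 0])"

definition target_tree :: "nat \<Rightarrow> nat \<Rightarrow> nat + nat \<Rightarrow> (nat + nat) option" where
  "target_tree p q = chain_tree (target_chain p q) (Inl ` {..<target_base q})"

definition target_chain_rank :: "nat \<Rightarrow> nat \<Rightarrow> nat + nat \<Rightarrow> nat" where
  "target_chain_rank p q x = (let c = target_base q; r = target_cut q in
     case x of
       Inl j \<Rightarrow> if c < j then j - c - 1 else p - c - 1 + (q - r)
     | Inr i \<Rightarrow> p - c - 1 + (q - 1 - i) + (if i < r then 1 else 0))"

context
  fixes p q :: nat
  assumes p: "0 < p" and q: "0 < q" and qp: "q \<le> 4 * p"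
begin

lemma set_target_chain: "set (target_chain p q) = Inl ` {target_base q..<p} \<union> Inr ` {..<q}"
proof -
  have "{..<q} = {target_cut q..<q} \<union> {1..<target_cut q} \<union> {0}"
    using target_cut_pos[OF q] target_cut_le[of q] by auto
  moreover have "{target_base q..<p} = {Suc (target_base q)..<p} \<union> {target_base q}"
    using target_base_less[OF p q qp] by auto
  ultimately show ?thesis unfolding target_chain_def Let_def by (auto simp: image_Un)
qed

lemma distinct_target_chain: "distinct (target_chain p q)"
  unfolding target_chain_def Let_def using target_cut_pos[OF q] by (auto simp: distinct_map)

lemma sorted_target_chain:
  "sorted_wrt (\<lambda>a b. target_chain_rank p q a < target_chain_rank p q b) (target_chain p q)"
proof -
  define c where "c = target_base q"
  define r where "r = target_cut q"
  have c: "c < p" and r: "1 \<le> r" "r \<le> q"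
    using target_base_less[OF p q qp] target_cut_pos[OF q] target_cut_le[of q]
    unfolding c_def r_def by auto
  let ?R = "\<lambda>a b. target_chain_rank p q a < target_chain_rank p q b"
  have rank_Inl:
    "target_chain_rank p q (Inl j) = (if c < j then j - c - 1 else p - c - 1 + (q - r))"
    for j unfolding target_chain_rank_def c_def r_def by simp
  have rank_Inr:
    "target_chain_rank p q (Inr i) = p - c - 1 + (q - 1 - i) + (if i < r then 1 else 0)"
    for i unfolding target_chain_rank_def c_def r_def by simp
  have "sorted_wrt ?R (map Inl [Suc c..<p])"
    unfolding sorted_wrt_map by (rule sorted_wrt_upt_rel) (simp add: rank_Inl)
  moreover have "sorted_wrt ?R (map Inr (rev [r..<q]))"
    unfolding sorted_wrt_map sorted_wrt_rev by (rule sorted_wrt_upt_rel) (simp add: rank_Inr)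
  moreover have "sorted_wrt ?R (map Inr (rev [1..<r]))"
    unfolding sorted_wrt_map sorted_wrt_rev
    by (rule sorted_wrt_upt_rel) (use r in \<open>simp add: rank_Inr\<close>)
  ultimately show ?thesis
    unfolding target_chain_def Let_def c_def[symmetric] r_def[symmetric]
    using r c by (auto simp: sorted_wrt_append rank_Inl rank_Inr)
qed

lemma connected_in_target_chain_drop:
  assumes k: "k < length (target_chain p q)"
  shows "connected_in Kpq_adj (set (drop k (target_chain p q)) \<union> Inl ` {..<target_base q})"
proof -
  have "last (target_chain p q) \<in> set (drop k (target_chain p q))"
    using k by (metis last_drop last_in_set drop_eq_Nil not_le)
  then have Inr0: "Inr 0 \<in> set (drop k (target_chain p q))"
    unfolding target_chain_def Let_def by simp
  show ?thesis
  proof (cases "target_base q = 0")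
    case False
    then show ?thesis using Inr0 by (intro connected_in_Kpq[of 0 _ 0]) auto
  next
    case True
    define P where "P = map Inl [Suc 0..<p] @ map Inr (rev [1..<q])"
    have "target_cut q = 1" using target_cut_le_base[OF q] target_cut_pos[OF q] True by simp
    then have chain: "target_chain p q = P @ [Inl 0, Inr 0]"
      unfolding target_chain_def P_def using True by simp
    show ?thesis
    proof (cases "k \<le> length P")
      case True
      then have "set (drop k (target_chain p q)) = set (drop k P) \<union> {Inl 0, Inr 0}"
        unfolding chain by simp
      then show ?thesis using connected_in_Kpq[of 0 _ 0] by simp
    next
      case False
      then have "k = Suc (length P)" using k unfolding chain by simp
      then have "set (drop k (target_chain p q)) = {Inr 0}" unfolding chain by simp
      then show ?thesis using \<open>target_base q = 0\<close> connected_in_singleton by simp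
    qed
  qed
qed

lemma search_tree_target_tree: "search_tree Kpq_adj (Kpq_verts p q) (target_tree p q)"
  unfolding target_tree_def
proof (rule search_tree_chain_tree[OF distinct_target_chain])
  show "set (target_chain p q) \<inter> Inl ` {..<target_base q} = {}" unfolding set_target_chain by auto
  show "target_chain p q \<noteq> []" unfolding target_chain_def Let_def by simp
  show "\<forall>a\<in>Inl ` {..<target_base q}. \<forall>b\<in>Inl ` {..<target_base q}. \<not> Kpq_adj a b" by auto
  have "{..<p} = {target_base q..<p} \<union> {..<target_base q}" using target_base_less[OF p q qp] by auto
  then show "Kpq_verts p q = set (target_chain p q) \<union> Inl ` {..<target_base q}"
    unfolding set_target_chain Kpq_verts_def by auto
  show "\<forall>k. 0 < k \<longrightarrow> k < length (target_chain p q) \<longrightarrow>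
      connected_in Kpq_adj (set (drop k (target_chain p q)) \<union> Inl ` {..<target_base q})"
    using connected_in_target_chain_drop by blast
qed

lemma ancestors_target_tree:
  shows "j < p \<Longrightarrow> i < q \<Longrightarrow> Inr i \<in> ancestors (target_tree p q) (Inl j) \<longleftrightarrow>
      j < target_base q \<or> (j = target_base q \<and> target_cut q \<le> i)"
    and "i < j \<Longrightarrow> j < q \<Longrightarrow> Inr j \<in> ancestors (target_tree p q) (Inr i)"
proof -
  have disj: "set (target_chain p q) \<inter> Inl ` {..<target_base q} = {}" unfolding set_target_chain
    by auto
  note anc = ancestors_chain_tree_sorted[OF distinct_target_chain disj _ sorted_target_chain,
      folded target_tree_def]
  have ne: "target_chain p q \<noteq> []" unfolding target_chain_def Let_def by simp
  have Inr_in: "i < q \<Longrightarrow> Inr i \<in> set (target_chain p q)" for i unfolding set_target_chain by simp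
  show "j < p \<Longrightarrow> i < q \<Longrightarrow> Inr i \<in> ancestors (target_tree p q) (Inl j) \<longleftrightarrow>
      j < target_base q \<or> (j = target_base q \<and> target_cut q \<le> i)"
  proof -
    assume j: "j < p" and i: "i < q"
    show ?thesis
    proof (cases "j < target_base q")
      case True
      then show ?thesis using anc(1)[OF ne, of "Inl j" "Inr i"] Inr_in[OF i] by simp
    next
      case False
      then have "Inl j \<in> set (target_chain p q)" unfolding set_target_chain using j by simp
      then have "Inr i \<in> ancestors (target_tree p q) (Inl j) \<longleftrightarrow>
          target_chain_rank p q (Inr i) < target_chain_rank p q (Inl j)"
        using anc(2)[OF ne, of "Inl j" "Inr i"] Inr_in[OF i] by simp
      also have "\<dots> \<longleftrightarrow> j = target_base q \<and> target_cut q \<le> i"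
        using False i j target_cut_le[of q] target_base_less[OF p q qp]
        unfolding target_chain_rank_def Let_def by auto
      finally show ?thesis using False by simp
    qed
  qed
  show "i < j \<Longrightarrow> j < q \<Longrightarrow> Inr j \<in> ancestors (target_tree p q) (Inr i)"
    using anc(2)[OF ne, of "Inr i" "Inr j"] Inr_in
    unfolding target_chain_rank_def Let_def by auto
qed

lemma below_count_target_tree: "i < q \<Longrightarrow> below_count p (target_tree p q) i = target q i"
proof -
  assume i: "i < q"
  have "{j. j < p \<and> Inr i \<in> ancestors (target_tree p q) (Inl j)} =
      {..<target_base q} \<union> (if target_cut q \<le> i then {target_base q} else {})"
    using ancestors_target_tree(1)[OF _ i] target_base_less[OF p q qp] by auto
  then show ?thesis unfolding below_count_def target_def by auto
qed

lemma inversions_target_tree: "inversions q (target_tree p q) = {}"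
proof -
  have "Inr (max i j) \<in> ancestors (target_tree p q) (Inr (min i j))"
    if "i < q" "j < q" "i \<noteq> j" for i j
    by (rule ancestors_target_tree(2)) (use that in auto)
  then show ?thesis unfolding inversions_def by auto
qed

lemma tree_potential_target_tree: "tree_potential p q (target q) (target_tree p q) = 0"
proof -
  have "potential_at q (target q) (below_count p (target_tree p q)) {} {} = 0"
    unfolding potential_at_def cost_def absdiff_def using below_count_target_tree by simp
  then show ?thesis unfolding tree_potential_def inversions_target_tree
    using potential_le_potential_at[of "{}" q] by (metis empty_subsetI le_zero_eq)
qed

end

theorem corollary4p8:
  fixes p q :: nat
  assumes "0 < p" and "0 < q"
    and "min 2 (real p / 4) \<le> real q" and "q \<le> 4 * p"
  shows "enat (p * q + (q choose 2) div 2) \<le> rot_diam Kpq_adj (Kpq_verts p q)"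
proof -
  let ?T1 = "Inr_chain_tree p q" and ?T2 = "target_tree p q"
  have "2 * (p * q + (q choose 2) div 2) + tree_potential p q (target q) ?T2
      \<le> tree_potential p q (target q) ?T1"
    using tree_potential_Inr_chain_tree[OF assms(1,2,4)] tree_potential_target_tree[OF assms(1,2,4)]
    by simp
  then have "enat (p * q + (q choose 2) div 2) \<le> rot_dist Kpq_adj (Kpq_verts p q) ?T1 ?T2"
    by (rule rot_dist_ge_potential_gap[OF assms(1,2)])
  also have "\<dots> \<le> rot_diam Kpq_adj (Kpq_verts p q)"
    unfolding rot_diam_def
    using search_tree_Inr_chain_tree[OF assms(1,2)] search_tree_target_tree[OF assms(1,2,4)]
    by (intro SUP_upper2[of "(?T1, ?T2)"]) auto
  finally show ?thesis .
qed

end
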